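(* Assume the standing assumptions listed in the context, and in addition that $\frac1\beta\bigl(\mu_0+\Delta\phi_0-B(\phi_0)-\pi(\phi_0)\bigr)\in V$ and $\phi_Q,\sigma_Q\in H^1(0,T;H)$. Let $(u,\tau)\in\mathcal U_{ad}\times[0,T]$ be an admissible control pair with corresponding state $(\mu,\phi,\sigma)=\mathcal S(u)$. Then the reduced cost functional $\mathcal J_{\rm red}$ is Fréchet differentiable with respect to the time variable $\tau$, and $$D_\tau\mathcal J_{\rm red}(u,\tau)=\frac{b_1}2\int_\Omega|\phi(\tau)-\phi_Q(\tau)|^2+b_2\int_\Omega(\phi(\tau)-\phi_\Omega)\partial_t\phi(\tau)+\frac{b_3}2\int_\Omega|\sigma(\tau)-\sigma_Q(\tau)|^2+\frac{b_4}2\int_\Omega\partial_t\phi(\tau)+b_5+b_6(\tau-\tau_* ).$$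
   Context: Let $\Omega\subset\mathbb{R}^3$ be a smooth bounded domain with boundary $\Gamma$, $T>0$, $Q_t=\Omega\times(0,t)$, $Q=Q_T$, $\Sigma=\Gamma\times(0,T)$, $\partial_{\mathbf n}$ the outward normal derivative. Set $H=L^2(\Omega)$, $V=H^1(\Omega)$, $W=\{v\in H^2(\Omega):\partial_{\mathbf n}v=0\text{ on }\Gamma\}$. Standing assumptions: $\alpha,\beta>0$; $b_0,\dots,b_6$ are nonnegative constants, not all zero; $\phi_Q,\sigma_Q\in L^2(Q)$, $\phi_\Omega\in L^2(\Omega)$; $\tau_*\in[0,T]$; $P\in C^2(\mathbb{R})$ is nonnegative, bounded, with bounded derivative, and Lipschitz continuous; $F=\hat B+\hat\pi$ is nonnegative, where $\hat B:\mathbb{R}\to[0,+\infty]$ is convex and lower semicontinuous with $\hat B(0)=0$, $\hat\pi\in C^3(\mathbb{R})$ and $\pi:=\hat\pi'$ is Lipschitz; $B:=\partial\hat B$ has domain $(r_-,r_+)$ with $-\infty\le r_-<0<r_+\le+\infty$, $F|_{(r_-,r_+)}\in C^3(r_-,r_+)$ and $\lim_{r\to r_\pm}F'(r)=\pm\infty$; $\phi_0\in W$, $\mu_0\in V\cap L^\infty(\Omega)$, $\sigma_0\in V$, $F(\phi_0)\in L^1(\Omega)$, $r_-<\inf\phi_0\le\sup\phi_0<r_+$; $u_*,u^*\in L^\infty(Q)$ with $u_*\le u^*$ a.e.; $\mathcal U_{ad}:=\{u\in L^\infty(Q):u_*\le u\le u^*\text{ a.e. in }Q\}$; $\mathcal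 U_R\subset L^2(Q)$ is a nonempty bounded open set containing $\mathcal U_{ad}$ with $\|u\|_{L^2(Q)}\le R$ on $\mathcal U_R$. State system for a control $u$: $\alpha\partial_t\mu+\partial_t\phi-\Delta\mu=P(\phi)(\sigma-\mu)$, $\mu=\beta\partial_t\phi-\Delta\phi+F'(\phi)$, $\partial_t\sigma-\Delta\sigma=-P(\phi)(\sigma-\mu)+u$ in $Q$; homogeneous Neumann conditions for $\mu,\phi,\sigma$ on $\Sigma$; $\mu(0)=\mu_0,\phi(0)=\phi_0,\sigma(0)=\sigma_0$. For each $u\in\mathcal U_R$ it has a unique solution $\mathcal S(u)=(\mathcal S_1(u),\mathcal S_2(u),\mathcal S_3(u))=(\mu,\phi,\sigma)$ with $\mu,\sigma\in H^1(0,T;H)\cap L^\infty(0,T;V)\cap L^2(0,T;W)$ and (under the additional assumption above) $\phi\in W^{1,\infty}(0,T;V)\cap H^2(0,T;H)\subset C^1([0,T];H)$. Cost functional: $\mathcal J(\phi,\sigma,u,\tau)=\frac{b_1}2\int_{Q_\tau}|\phi-\phi_Q|^2+\frac{b_2}2\int_\Omega|\phi(\tau)-\phi_\Omega|^2+\frac{b_3}2\int_{Q_\tau}|\sigma-\sigma_Q|^2+\frac{b_4}2\int_\Omega(1+\phi(\tau))+b_5\tau+\frac{b_6}2|\tau-\tau_*|^2+\frac{b_0}2\int_Q|u|^2$. Reduced cost functional: $\mathcal J_{\rm red}(u,\tau)=\mathcal J(\mathcal S_2(u),\mathcal S_3(u),u,\tau)$. *)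

theory Defs
  imports "HOL-Analysis.Analysis"
begin

primrec Ck_on :: "nat \<Rightarrow> 'a::euclidean_space set \<Rightarrow> ('a \<Rightarrow> real) \<Rightarrow> bool" where
  "Ck_on 0 S f = continuous_on S f"
| "Ck_on (Suc k) S f = ((\<forall>x\<in>S. f differentiable (at x)) \<and>
      (\<forall>i\<in>Basis. Ck_on k S (\<lambda>x. frechet_derivative f (at x) i)))"

definition smooth :: "('a::euclidean_space \<Rightarrow> real) \<Rightarrow> bool" where
  "smooth f \<longleftrightarrow> (\<forall>k. Ck_on k UNIV f)"

definition smooth_bounded_domain :: "'a::euclidean_space set \<Rightarrow> bool" where
  "smooth_bounded_domain \<Omega> \<longleftrightarrow> open \<Omega> \<and> connected \<Omega> \<and> bounded \<Omega> \<and> \<Omega> \<noteq> {} \<and>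
     (\<forall>p\<in>frontier \<Omega>. \<exists>r>0. \<exists>\<rho>. smooth \<rho> \<and>
        (\<forall>x\<in>ball p r. x \<in> \<Omega> \<longleftrightarrow> \<rho> x < 0) \<and>
        (\<forall>x\<in>ball p r. \<exists>i\<in>Basis. frechet_derivative \<rho> (at x) i \<noteq> 0))"

definition L2 :: "'a::euclidean_space set \<Rightarrow> ('a \<Rightarrow> real) \<Rightarrow> bool" where
  "L2 \<Omega> f \<longleftrightarrow> f \<in> borel_measurable (lebesgue_on \<Omega>) \<and> integrable (lebesgue_on \<Omega>) (\<lambda>x. (f x)\<^sup>2)"

definition Linf :: "'a::euclidean_space set \<Rightarrow> ('a \<Rightarrow> real) \<Rightarrow> bool" where
  "Linf \<Omega> f \<longleftrightarrow> f \<in> borel_measurable (lebesgue_on \<Omega>) \<and> (\<exists>C. AE x in lebesgue_on \<Omega>. \<bar>f x\<bar> \<le> C)"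

definition Hnorm :: "'a::euclidean_space set \<Rightarrow> ('a \<Rightarrow> real) \<Rightarrow> real" where
  "Hnorm \<Omega> f = sqrt (\<integral>x. (f x)\<^sup>2 \<partial>lebesgue_on \<Omega>)"

definition test_fun :: "'a::euclidean_space set \<Rightarrow> ('a \<Rightarrow> real) \<Rightarrow> bool" where
  "test_fun \<Omega> \<psi> \<longleftrightarrow> smooth \<psi> \<and> compact (closure {x. \<psi> x \<noteq> 0}) \<and> closure {x. \<psi> x \<noteq> 0} \<subseteq> \<Omega>"

definition weak_deriv :: "'a::euclidean_space set \<Rightarrow> ('a \<Rightarrow> real) \<Rightarrow> 'a \<Rightarrow> ('a \<Rightarrow> real) \<Rightarrow> bool" where
  "weak_deriv \<Omega> f i g \<longleftrightarrow> (\<forall>\<psi>. test_fun \<Omega> \<psi> \<longrightarrow>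
     (\<integral>x. f x * frechet_derivative \<psi> (at x) i \<partial>lebesgue_on \<Omega>) = - (\<integral>x. g x * \<psi> x \<partial>lebesgue_on \<Omega>))"

definition wd :: "'a::euclidean_space set \<Rightarrow> ('a \<Rightarrow> real) \<Rightarrow> 'a \<Rightarrow> ('a \<Rightarrow> real)" where
  "wd \<Omega> f i = (SOME g. L2 \<Omega> g \<and> weak_deriv \<Omega> f i g)"

definition H1 :: "'a::euclidean_space set \<Rightarrow> ('a \<Rightarrow> real) \<Rightarrow> bool" where
  "H1 \<Omega> f \<longleftrightarrow> L2 \<Omega> f \<and> (\<forall>i\<in>Basis. \<exists>g. L2 \<Omega> g \<and> weak_deriv \<Omega> f i g)"

definition H2 :: "'a::euclidean_space set \<Rightarrow> ('a \<Rightarrow> real) \<Rightarrow> bool" where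
  "H2 \<Omega> f \<longleftrightarrow> H1 \<Omega> f \<and> (\<forall>i\<in>Basis. H1 \<Omega> (wd \<Omega> f i))"

definition lap :: "'a::euclidean_space set \<Rightarrow> ('a \<Rightarrow> real) \<Rightarrow> 'a \<Rightarrow> real" where
  "lap \<Omega> f = (\<lambda>x. \<Sum>i\<in>Basis. wd \<Omega> (wd \<Omega> f i) i x)"

definition Vnorm :: "'a::euclidean_space set \<Rightarrow> ('a \<Rightarrow> real) \<Rightarrow> real" where
  "Vnorm \<Omega> f = sqrt ((Hnorm \<Omega> f)\<^sup>2 + (\<Sum>i\<in>Basis. (Hnorm \<Omega> (wd \<Omega> f i))\<^sup>2))"

definition Wnorm :: "'a::euclidean_space set \<Rightarrow> ('a \<Rightarrow> real) \<Rightarrow> real" where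
  "Wnorm \<Omega> f = sqrt ((Vnorm \<Omega> f)\<^sup>2 + (\<Sum>i\<in>Basis. \<Sum>j\<in>Basis. (Hnorm \<Omega> (wd \<Omega> (wd \<Omega> f i) j))\<^sup>2))"

text \<open>W = {v in H^2 : normal derivative of v vanishes on the boundary}; the homogeneous
  Neumann condition is expressed through Green's formula.\<close>
definition Wsp :: "'a::euclidean_space set \<Rightarrow> ('a \<Rightarrow> real) \<Rightarrow> bool" where
  "Wsp \<Omega> v \<longleftrightarrow> H2 \<Omega> v \<and> (\<forall>w. H1 \<Omega> w \<longrightarrow>
     (\<integral>x. lap \<Omega> v x * w x \<partial>lebesgue_on \<Omega>) =
       - (\<integral>x. (\<Sum>i\<in>Basis. wd \<Omega> v i x * wd \<Omega> w i x) \<partial>lebesgue_on \<Omega>))"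

section \<open>Time-dependent functions  f :: real => space => real  (f t = value at time t)\<close>

definition meas_Q :: "'a::euclidean_space set \<Rightarrow> real \<Rightarrow> (real \<Rightarrow> 'a \<Rightarrow> real) \<Rightarrow> bool" where
  "meas_Q \<Omega> T f \<longleftrightarrow> (\<lambda>(x,t). f t x) \<in> borel_measurable (lebesgue_on (\<Omega> \<times> {0<..<T}))"

definition L2Q :: "'a::euclidean_space set \<Rightarrow> real \<Rightarrow> (real \<Rightarrow> 'a \<Rightarrow> real) \<Rightarrow> bool" where
  "L2Q \<Omega> T f \<longleftrightarrow> meas_Q \<Omega> T f \<and> integrable (lebesgue_on (\<Omega> \<times> {0<..<T})) (\<lambda>(x,t). (f t x)\<^sup>2)"

definition LinfQ :: "'a::euclidean_space set \<Rightarrow> real \<Rightarrow> (real \<Rightarrow> 'a \<Rightarrow> real) \<Rightarrow> bool" where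
  "LinfQ \<Omega> T f \<longleftrightarrow> meas_Q \<Omega> T f \<and> (\<exists>C. AE p in lebesgue_on (\<Omega> \<times> {0<..<T}). \<bar>(\<lambda>(x,t). f t x) p\<bar> \<le> C)"

text \<open>L^2(0,T;X) and L^infinity(0,T;X) for X in {H,V,W}, given membership predicate and norm.\<close>
definition L2t :: "'a::euclidean_space set \<Rightarrow> real \<Rightarrow> (('a \<Rightarrow> real) \<Rightarrow> bool) \<Rightarrow> (('a \<Rightarrow> real) \<Rightarrow> real)
    \<Rightarrow> (real \<Rightarrow> 'a \<Rightarrow> real) \<Rightarrow> bool" where
  "L2t \<Omega> T X N f \<longleftrightarrow> meas_Q \<Omega> T f \<and> (AE t in lebesgue_on {0<..<T}. X (f t)) \<and>
     (\<integral>\<^sup>+ t. ennreal ((N (f t))\<^sup>2) \<partial>lebesgue_on {0<..<T}) < \<infinity>"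

definition Linft :: "'a::euclidean_space set \<Rightarrow> real \<Rightarrow> (('a \<Rightarrow> real) \<Rightarrow> bool) \<Rightarrow> (('a \<Rightarrow> real) \<Rightarrow> real)
    \<Rightarrow> (real \<Rightarrow> 'a \<Rightarrow> real) \<Rightarrow> bool" where
  "Linft \<Omega> T X N f \<longleftrightarrow> meas_Q \<Omega> T f \<and> (AE t in lebesgue_on {0<..<T}. X (f t)) \<and>
     (\<exists>C. AE t in lebesgue_on {0<..<T}. N (f t) \<le> C)"

definition tderiv :: "'a::euclidean_space set \<Rightarrow> real \<Rightarrow> (real \<Rightarrow> 'a \<Rightarrow> real) \<Rightarrow> (real \<Rightarrow> 'a \<Rightarrow> real) \<Rightarrow> bool" where
  "tderiv \<Omega> T f g \<longleftrightarrow> (\<forall>\<zeta> v. test_fun {0<..<T} \<zeta> \<and> L2 \<Omega> v \<longrightarrow>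
     (\<integral>t. (\<integral>x. f t x * v x \<partial>lebesgue_on \<Omega>) * deriv \<zeta> t \<partial>lebesgue_on {0<..<T}) =
     - (\<integral>t. (\<integral>x. g t x * v x \<partial>lebesgue_on \<Omega>) * \<zeta> t \<partial>lebesgue_on {0<..<T}))"

definition H1tH :: "'a::euclidean_space set \<Rightarrow> real \<Rightarrow> (real \<Rightarrow> 'a \<Rightarrow> real) \<Rightarrow> (real \<Rightarrow> 'a \<Rightarrow> real) \<Rightarrow> bool" where
  "H1tH \<Omega> T f g \<longleftrightarrow> L2t \<Omega> T (L2 \<Omega>) (Hnorm \<Omega>) f \<and> L2t \<Omega> T (L2 \<Omega>) (Hnorm \<Omega>) g \<and> tderiv \<Omega> T f g"

definition CH :: "'a::euclidean_space set \<Rightarrow> real \<Rightarrow> (real \<Rightarrow> 'a \<Rightarrow> real) \<Rightarrow> bool" where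
  "CH \<Omega> T f \<longleftrightarrow> (\<forall>t\<in>{0..T}. L2 \<Omega> (f t)) \<and>
     (\<forall>t\<in>{0..T}. ((\<lambda>s. Hnorm \<Omega> (\<lambda>x. f s x - f t x)) \<longlongrightarrow> 0) (at t within {0..T}))"

definition ereal_convex :: "(real \<Rightarrow> ereal) \<Rightarrow> bool" where
  "ereal_convex f \<longleftrightarrow> (\<forall>x y l. 0 \<le> l \<and> l \<le> 1 \<longrightarrow>
     f (l * x + (1 - l) * y) \<le> ereal l * f x + ereal (1 - l) * f y)"

definition ereal_lsc :: "(real \<Rightarrow> ereal) \<Rightarrow> bool" where
  "ereal_lsc f \<longleftrightarrow> (\<forall>x. f x \<le> Liminf (at x) f)"

definition subdiff_dom :: "(real \<Rightarrow> ereal) \<Rightarrow> real set" where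
  "subdiff_dom f = {x. f x \<noteq> \<infinity> \<and> (\<exists>s. \<forall>y. f x + ereal (s * (y - x)) \<le> f y)}"

definition ereal_interval :: "ereal \<Rightarrow> ereal \<Rightarrow> real set" where
  "ereal_interval a b = {r. a < ereal r \<and> ereal r < b}"

definition left_filter :: "ereal \<Rightarrow> real filter" where
  "left_filter b = (if b = \<infinity> then at_top else at_left (real_of_ereal b))"

definition right_filter :: "ereal \<Rightarrow> real filter" where
  "right_filter a = (if a = -\<infinity> then at_bot else at_right (real_of_ereal a))"

text \<open>F' on (r_-,r_+), where F = B_hat + pi_hat is finite.\<close>
definition Fprime :: "(real \<Rightarrow> ereal) \<Rightarrow> (real \<Rightarrow> real) \<Rightarrow> real \<Rightarrow> real" where
  "Fprime Bh pih = deriv (\<lambda>r. real_of_ereal (Bh r + ereal (pih r)))"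

definition state_sol :: "'a::euclidean_space set \<Rightarrow> real \<Rightarrow> real \<Rightarrow> real \<Rightarrow> (real \<Rightarrow> real)
   \<Rightarrow> (real \<Rightarrow> ereal) \<Rightarrow> (real \<Rightarrow> real) \<Rightarrow> ereal \<Rightarrow> ereal
   \<Rightarrow> ('a \<Rightarrow> real) \<Rightarrow> ('a \<Rightarrow> real) \<Rightarrow> ('a \<Rightarrow> real) \<Rightarrow> (real \<Rightarrow> 'a \<Rightarrow> real)
   \<Rightarrow> (real \<Rightarrow> 'a \<Rightarrow> real) \<Rightarrow> (real \<Rightarrow> 'a \<Rightarrow> real) \<Rightarrow> (real \<Rightarrow> 'a \<Rightarrow> real)
   \<Rightarrow> (real \<Rightarrow> 'a \<Rightarrow> real) \<Rightarrow> (real \<Rightarrow> 'a \<Rightarrow> real) \<Rightarrow> (real \<Rightarrow> 'a \<Rightarrow> real) \<Rightarrow> bool" where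
  "state_sol \<Omega> T \<alpha> \<beta> P Bh pih rm rp \<mu>0 \<phi>0 \<sigma>0 u \<mu> \<phi> \<sigma> d\<mu> d\<phi> d\<sigma> \<longleftrightarrow>
     \<comment> \<open>regularity of mu and sigma: H^1(0,T;H) \<inter> L^\<infinity>(0,T;V) \<inter> L^2(0,T;W)\<close>
     H1tH \<Omega> T \<mu> d\<mu> \<and> Linft \<Omega> T (H1 \<Omega>) (Vnorm \<Omega>) \<mu> \<and> L2t \<Omega> T (Wsp \<Omega>) (Wnorm \<Omega>) \<mu> \<and>
     H1tH \<Omega> T \<sigma> d\<sigma> \<and> Linft \<Omega> T (H1 \<Omega>) (Vnorm \<Omega>) \<sigma> \<and> L2t \<Omega> T (Wsp \<Omega>) (Wnorm \<Omega>) \<sigma> \<and>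
     \<comment> \<open>regularity of phi: W^{1,\<infinity>}(0,T;V) \<inter> H^2(0,T;H)\<close>
     Linft \<Omega> T (H1 \<Omega>) (Vnorm \<Omega>) \<phi> \<and> Linft \<Omega> T (H1 \<Omega>) (Vnorm \<Omega>) d\<phi> \<and> tderiv \<Omega> T \<phi> d\<phi> \<and>
     H1tH \<Omega> T \<phi> d\<phi> \<and> (\<exists>dd\<phi>. H1tH \<Omega> T d\<phi> dd\<phi>) \<and>
     \<comment> \<open>homogeneous Neumann conditions (phi(t), mu(t), sigma(t) in W for a.e. t)\<close>
     (AE t in lebesgue_on {0<..<T}. Wsp \<Omega> (\<mu> t) \<and> Wsp \<Omega> (\<phi> t) \<and> Wsp \<Omega> (\<sigma> t)) \<and>
     \<comment> \<open>the equations, a.e. in Q\<close>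
     (AE t in lebesgue_on {0<..<T}. AE x in lebesgue_on \<Omega>.
        ereal (\<phi> t x) \<in> {rm<..<rp} \<and>
        \<alpha> * d\<mu> t x + d\<phi> t x - lap \<Omega> (\<mu> t) x = P (\<phi> t x) * (\<sigma> t x - \<mu> t x) \<and>
        \<mu> t x = \<beta> * d\<phi> t x - lap \<Omega> (\<phi> t) x + Fprime Bh pih (\<phi> t x) \<and>
        d\<sigma> t x - lap \<Omega> (\<sigma> t) x = - P (\<phi> t x) * (\<sigma> t x - \<mu> t x) + u t x) \<and>
     \<comment> \<open>initial conditions\<close>
     (AE x in lebesgue_on \<Omega>. \<mu> 0 x = \<mu>0 x \<and> \<phi> 0 x = \<phi>0 x \<and> \<sigma> 0 x = \<sigma>0 x)"

text \<open>The cost functional J(phi, sigma, u, tau); b k is the constant b_k (k = 0..6).\<close>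
definition cost :: "'a::euclidean_space set \<Rightarrow> real \<Rightarrow> (nat \<Rightarrow> real) \<Rightarrow> (real \<Rightarrow> 'a \<Rightarrow> real)
   \<Rightarrow> (real \<Rightarrow> 'a \<Rightarrow> real) \<Rightarrow> ('a \<Rightarrow> real) \<Rightarrow> real
   \<Rightarrow> (real \<Rightarrow> 'a \<Rightarrow> real) \<Rightarrow> (real \<Rightarrow> 'a \<Rightarrow> real) \<Rightarrow> (real \<Rightarrow> 'a \<Rightarrow> real) \<Rightarrow> real \<Rightarrow> real" where
  "cost \<Omega> T b \<phi>Q \<sigma>Q \<phi>\<Omega> \<tau>s \<phi> \<sigma> u \<tau> =
     b 1 / 2 * (\<integral>p. (\<lambda>(x,t). (\<phi> t x - \<phi>Q t x)\<^sup>2) p \<partial>lebesgue_on (\<Omega> \<times> {0<..<\<tau>}))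
   + b 2 / 2 * (\<integral>x. (\<phi> \<tau> x - \<phi>\<Omega> x)\<^sup>2 \<partial>lebesgue_on \<Omega>)
   + b 3 / 2 * (\<integral>p. (\<lambda>(x,t). (\<sigma> t x - \<sigma>Q t x)\<^sup>2) p \<partial>lebesgue_on (\<Omega> \<times> {0<..<\<tau>}))
   + b 4 / 2 * (\<integral>x. 1 + \<phi> \<tau> x \<partial>lebesgue_on \<Omega>)
   + b 5 * \<tau>
   + b 6 / 2 * (\<tau> - \<tau>s)\<^sup>2
   + b 0 / 2 * (\<integral>p. (\<lambda>(x,t). (u t x)\<^sup>2) p \<partial>lebesgue_on (\<Omega> \<times> {0<..<T}))"

end

theory Submission
  imports Defs
begin

text \<open>
  Every term of the cost is differentiable in \<open>\<tau>\<close> for reasons that only involve the time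
  regularity of the state, not the state equations. The tracking terms over \<open>Q\<^sub>\<tau>\<close> are, by
  Tonelli's theorem, primitives of the continuous functions \<open>t \<mapsto> \<parallel>\<phi>(t) - \<phi>\<^sub>Q(t)\<parallel>\<^sup>2\<close> and
  \<open>t \<mapsto> \<parallel>\<sigma>(t) - \<sigma>\<^sub>Q(t)\<parallel>\<^sup>2\<close>, so the fundamental theorem of calculus applies. The terminal
  terms need \<open>\<phi>\<close> to be differentiable as an \<open>L\<^sup>2(\<Omega>)\<close>-valued map. For each \<open>v\<close>, the scalar
  function \<open>t \<mapsto> (\<phi>(t), v)\<close> is continuous with continuous weak derivative \<open>(\<partial>\<^sub>t\<phi>(t), v)\<close>; by the
  du Bois-Reymond lemma it is therefore classically differentiable. The mean value theorem,
  applied with \<open>v\<close> the remainder of the difference quotient, bounds that remainder by the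
  oscillation of \<open>\<partial>\<^sub>t\<phi>\<close>, which tends to zero because \<open>\<partial>\<^sub>t\<phi>\<close> is continuous into \<open>L\<^sup>2(\<Omega>)\<close>.
\<close>

section \<open>Smooth functions of one real variable\<close>

lemma frechet_derivative_real_1:
  fixes f :: "real \<Rightarrow> real"
  assumes "f differentiable (at x)"
  shows "frechet_derivative f (at x) 1 = deriv f x"
proof -
  have "(f has_vector_derivative deriv f x) (at x)"
    using assms DERIV_deriv_iff_real_differentiable has_real_derivative_iff_has_vector_derivative
    by blast
  then show ?thesis
    using frechet_derivative_eq_vector_derivative[OF assms] by (simp add: vector_derivative_at)
qed

lemma Ck_on_Suc_real_iff:
  fixes f :: "real \<Rightarrow> real"
  shows "Ck_on (Suc k) UNIV f \<longleftrightarrow> (\<forall>x. f differentiable (at x)) \<and> Ck_on k UNIV (deriv f)"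
proof (cases "\<forall>x. f differentiable (at x)")
  case True
  then have "(\<lambda>x. frechet_derivative f (at x) 1) = deriv f"
    using frechet_derivative_real_1 by auto
  then show ?thesis using True by (simp add: Basis_real_def)
qed auto

declare Ck_on.simps(2)[simp del] \<comment> \<open>for real functions \<open>Ck_on_Suc_real_iff\<close> is the usable form\<close>

lemma Ck_on_real_SucI:
  fixes f :: "real \<Rightarrow> real"
  assumes "\<And>x. (f has_real_derivative f' x) (at x)" and "Ck_on k UNIV f'"
  shows "Ck_on (Suc k) UNIV f"
proof -
  have "deriv f = f'" using assms(1) DERIV_imp_deriv by blast
  then show ?thesis
    using assms real_differentiable_def unfolding Ck_on_Suc_real_iff by auto
qed

lemma Ck_on_real_has_derivative:
  fixes f :: "real \<Rightarrow> real"
  shows "Ck_on (Suc k) UNIV f \<Longrightarrow> (f has_real_derivative deriv f x) (at x)"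
  by (simp add: Ck_on_Suc_real_iff DERIV_deriv_iff_real_differentiable)

lemma Ck_on_real_deriv:
  fixes f :: "real \<Rightarrow> real"
  shows "Ck_on (Suc k) UNIV f \<Longrightarrow> Ck_on k UNIV (deriv f)"
  by (simp add: Ck_on_Suc_real_iff)

lemma Ck_on_real_continuous:
  fixes f :: "real \<Rightarrow> real"
  shows "Ck_on k UNIV f \<Longrightarrow> continuous_on UNIV f"
  by (cases k) (auto simp: Ck_on_Suc_real_iff continuous_at_imp_continuous_on
      differentiable_imp_continuous_within)

lemma Ck_on_real_Suc_imp:
  fixes f :: "real \<Rightarrow> real"
  shows "Ck_on (Suc k) UNIV f \<Longrightarrow> Ck_on k UNIV f"
proof (induction k arbitrary: f)
  case 0
  then show ?case using Ck_on_real_continuous by auto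
next
  case (Suc k)
  then show ?case by (simp add: Ck_on_Suc_real_iff)
qed

lemma Ck_on_real_const: "Ck_on k UNIV (\<lambda>x::real. c :: real)"
proof (induction k arbitrary: c)
  case (Suc k)
  show ?case by (rule Ck_on_real_SucI[where f'="\<lambda>x. 0"]) (auto intro: Suc)
qed simp

lemma Ck_on_real_affine: "Ck_on k UNIV (\<lambda>x::real. a * x + b)"
proof (cases k)
  case (Suc m)
  show ?thesis
    unfolding Suc
    by (rule Ck_on_real_SucI[where f'="\<lambda>x. a"]) (auto intro!: derivative_eq_intros Ck_on_real_const)
qed (simp add: continuous_on_add continuous_on_mult)

lemma Ck_on_real_add:
  fixes f g :: "real \<Rightarrow> real"
  shows "Ck_on k UNIV f \<Longrightarrow> Ck_on k UNIV g \<Longrightarrow> Ck_on k UNIV (\<lambda>x. f x + g x)"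
proof (induction k arbitrary: f g)
  case (Suc k)
  have "((\<lambda>x. f x + g x) has_real_derivative deriv f x + deriv g x) (at x)" for x
    using Suc.prems by (intro DERIV_add Ck_on_real_has_derivative)
  moreover have "Ck_on k UNIV (\<lambda>x. deriv f x + deriv g x)"
    using Suc.IH Suc.prems Ck_on_real_deriv by blast
  ultimately show ?case by (rule Ck_on_real_SucI)
qed (simp add: continuous_on_add)

lemma Ck_on_real_mult:
  fixes f g :: "real \<Rightarrow> real"
  shows "Ck_on k UNIV f \<Longrightarrow> Ck_on k UNIV g \<Longrightarrow> Ck_on k UNIV (\<lambda>x. f x * g x)"
proof (induction k arbitrary: f g)
  case (Suc k)
  have "Ck_on k UNIV (\<lambda>x. deriv f x * g x)" "Ck_on k UNIV (\<lambda>x. deriv g x * f x)"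
    using Suc.IH Suc.prems Ck_on_real_Suc_imp Ck_on_real_deriv by blast+
  then have "Ck_on k UNIV (\<lambda>x. deriv f x * g x + deriv g x * f x)"
    by (rule Ck_on_real_add)
  moreover have "((\<lambda>x. f x * g x) has_real_derivative deriv f x * g x + deriv g x * f x) (at x)" for x
    using Suc.prems by (intro DERIV_mult Ck_on_real_has_derivative)
  ultimately show ?case by (intro Ck_on_real_SucI)
qed (simp add: continuous_on_mult)

lemma Ck_on_real_diff:
  fixes f g :: "real \<Rightarrow> real"
  assumes "Ck_on k UNIV f" "Ck_on k UNIV g"
  shows "Ck_on k UNIV (\<lambda>x. f x - g x)"
  using Ck_on_real_add[OF assms(1) Ck_on_real_mult[OF Ck_on_real_const[of k "-1"] assms(2)]] by simp

lemma Ck_on_real_compose: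
  fixes f g :: "real \<Rightarrow> real"
  shows "Ck_on k UNIV f \<Longrightarrow> Ck_on k UNIV g \<Longrightarrow> Ck_on k UNIV (\<lambda>x. f (g x))"
proof (induction k arbitrary: f g)
  case (Suc k)
  have "Ck_on k UNIV (\<lambda>x. deriv f (g x))"
    using Suc.IH Suc.prems Ck_on_real_Suc_imp Ck_on_real_deriv by blast
  then have "Ck_on k UNIV (\<lambda>x. deriv f (g x) * deriv g x)"
    using Ck_on_real_mult Ck_on_real_deriv Suc.prems(2) by blast
  moreover have "((\<lambda>x. f (g x)) has_real_derivative deriv f (g x) * deriv g x) (at x)" for x
    using Suc.prems by (intro DERIV_chain2 Ck_on_real_has_derivative)
  ultimately show ?case by (intro Ck_on_real_SucI)
qed (auto intro: continuous_on_compose2)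

lemma Ck_on_real_inverse:
  fixes g :: "real \<Rightarrow> real"
  shows "Ck_on k UNIV g \<Longrightarrow> (\<And>x. g x \<noteq> 0) \<Longrightarrow> Ck_on k UNIV (\<lambda>x. 1 / g x)"
proof (induction k arbitrary: g)
  case 0
  then show ?case by (simp add: continuous_on_divide)
next
  case (Suc k)
  have inv: "Ck_on k UNIV (\<lambda>x. 1 / g x)"
    using Suc Ck_on_real_Suc_imp by blast
  have "Ck_on k UNIV (\<lambda>x. - 1 * (deriv g x * ((1 / g x) * (1 / g x))))"
    by (rule Ck_on_real_mult[OF Ck_on_real_const Ck_on_real_mult[OF Ck_on_real_deriv[OF Suc.prems(1)]
          Ck_on_real_mult[OF inv inv]]])
  moreover have "((\<lambda>x. 1 / g x) has_real_derivative - 1 * (deriv g x * ((1 / g x) * (1 / g x)))) (at x)"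
    for x
    using DERIV_inverse_fun[OF Ck_on_real_has_derivative[OF Suc.prems(1)] Suc.prems(2)]
    by (simp add: inverse_eq_divide)
  ultimately show ?case by (intro Ck_on_real_SucI)
qed

text \<open>The derivative of a term is the sum of two terms (\<open>flat_exp_term_has_derivative\<close>), so
  \<open>t \<mapsto> exp (-1/t)\<close>, extended by \<open>0\<close> to \<open>t \<le> 0\<close>, is smooth.\<close>

definition flat_exp_term :: "real \<Rightarrow> nat \<Rightarrow> real \<Rightarrow> real" where
  "flat_exp_term c k t = (if 0 < t then c * (1 / t) ^ k * exp (- 1 / t) else 0)"

lemma inverse_power_has_derivative:
  fixes x :: real
  assumes "x \<noteq> 0"
  shows "((\<lambda>t. (1 / t) ^ k) has_real_derivative - real k * (1 / x) ^ Suc k) (at x)"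
proof (induction k)
  case (Suc k)
  show ?case
    using DERIV_mult[OF DERIV_inverse[OF assms] Suc] assms
    by (simp add: inverse_eq_divide power2_eq_square field_simps)
qed simp

lemma flat_exp_term_has_derivative_at_0:
  "(flat_exp_term c k has_real_derivative 0) (at 0)"
proof -
  have "((\<lambda>y. c * (y ^ Suc k / exp y)) \<longlongrightarrow> 0) at_top"
    by (intro tendsto_mult_right_zero tendsto_power_div_exp_0)
  then have "((\<lambda>y. c * ((inverse y) ^ Suc k / exp (inverse y))) \<longlongrightarrow> 0) (at_right 0)"
    using filterlim_compose[OF _ filterlim_inverse_at_top_right] by (simp add: o_def)
  moreover have "\<forall>\<^sub>F y in at_right 0.
      c * ((inverse y) ^ Suc k / exp (inverse y)) =
      (flat_exp_term c k y - flat_exp_term c k 0) / (y - 0)"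
    by (auto simp: eventually_at_right_field flat_exp_term_def exp_minus field_simps
        intro!: exI[of _ 1])
  ultimately have "((\<lambda>y. (flat_exp_term c k y - flat_exp_term c k 0) / (y - 0)) \<longlongrightarrow> 0) (at_right 0)"
    by (rule Lim_transform_eventually)
  moreover have "((\<lambda>y. (flat_exp_term c k y - flat_exp_term c k 0) / (y - 0)) \<longlongrightarrow> 0) (at_left 0)"
    by (rule Lim_transform_eventually[OF tendsto_const])
      (auto simp: eventually_at_left_field flat_exp_term_def intro!: exI[of _ "-1"])
  ultimately show ?thesis
    unfolding has_field_derivative_iff using filterlim_at_split by blast
qed

lemma flat_exp_term_has_derivative:
  "(flat_exp_term c k has_real_derivative
     flat_exp_term (- c * k) (Suc k) x + flat_exp_term c (Suc (Suc k)) x) (at x)"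
proof -
  consider "x < 0" | "x = 0" | "0 < x" by linarith
  then show ?thesis
  proof cases
    case 1
    have "((\<lambda>t. 0) has_real_derivative 0) (at x)" by simp
    then have "(flat_exp_term c k has_real_derivative 0) (at x)"
      by (rule has_field_derivative_transform_within_open[where S="{..<0}"])
        (use 1 in \<open>auto simp: flat_exp_term_def\<close>)
    then show ?thesis using 1 by (simp add: flat_exp_term_def)
  next
    case 2
    then show ?thesis using flat_exp_term_has_derivative_at_0 by (simp add: flat_exp_term_def)
  next
    case 3
    then have x: "x \<noteq> 0" by simp
    have "((\<lambda>t. exp (- 1 / t)) has_real_derivative exp (- 1 / x) * (1 / x)\<^sup>2) (at x)"
      using 3 by (auto intro!: derivative_eq_intros simp: power2_eq_square)
    from DERIV_mult[OF DERIV_cmult[OF inverse_power_has_derivative[OF x]] this, of c k]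
    have "((\<lambda>t. c * (1 / t) ^ k * exp (- 1 / t)) has_real_derivative
        - c * k * (1 / x) ^ Suc k * exp (- 1 / x) + c * (1 / x) ^ Suc (Suc k) * exp (- 1 / x)) (at x)"
      by (rule DERIV_cong) (simp add: power2_eq_square algebra_simps)
    then have "(flat_exp_term c k has_real_derivative
        - c * k * (1 / x) ^ Suc k * exp (- 1 / x) + c * (1 / x) ^ Suc (Suc k) * exp (- 1 / x)) (at x)"
      by (rule has_field_derivative_transform_within_open[where S="{0<..}"])
        (use 3 in \<open>auto simp: flat_exp_term_def\<close>)
    then show ?thesis
      by (rule DERIV_cong) (use 3 in \<open>simp add: flat_exp_term_def\<close>)
  qed
qed

lemma Ck_on_flat_exp_term: "Ck_on n UNIV (flat_exp_term c k)"
proof (induction n arbitrary: c k)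
  case 0
  show ?case
    using flat_exp_term_has_derivative
    by (auto intro!: continuous_at_imp_continuous_on DERIV_continuous)
next
  case (Suc n)
  show ?case
    by (rule Ck_on_real_SucI[OF flat_exp_term_has_derivative Ck_on_real_add[OF Suc Suc]])
qed

definition smooth_step :: "real \<Rightarrow> real" where
  "smooth_step t = flat_exp_term 1 0 t / (flat_exp_term 1 0 t + flat_exp_term 1 0 (1 - t))"

lemma flat_exp_term_1_0_mono: "a \<le> b \<Longrightarrow> flat_exp_term 1 0 a \<le> flat_exp_term 1 0 b"
  by (auto simp: flat_exp_term_def frac_le divide_le_cancel)

lemma smooth_step_denominator_pos: "0 < flat_exp_term 1 0 t + flat_exp_term 1 0 (1 - t)"
  by (cases "0 < t") (auto simp: flat_exp_term_def add_pos_nonneg add_nonneg_pos)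

lemma smooth_step_eq_0: "t \<le> 0 \<Longrightarrow> smooth_step t = 0"
  by (simp add: smooth_step_def flat_exp_term_def)

lemma smooth_step_eq_1: "1 \<le> t \<Longrightarrow> smooth_step t = 1"
  using smooth_step_denominator_pos[of t] by (simp add: smooth_step_def flat_exp_term_def)

lemma mono_smooth_step: "mono smooth_step"
proof
  fix a b :: real
  assume "a \<le> b"
  define E where "E = flat_exp_term 1 0"
  have "E a * E (1 - b) \<le> E b * E (1 - a)"
    using \<open>a \<le> b\<close> flat_exp_term_1_0_mono[of a b] flat_exp_term_1_0_mono[of "1 - b" "1 - a"]
    by (intro mult_mono) (auto simp: E_def flat_exp_term_def)
  then have "E a * (E b + E (1 - b)) \<le> E b * (E a + E (1 - a))"
    by (simp add: algebra_simps)
  then show "smooth_step a \<le> smooth_step b"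
    using smooth_step_denominator_pos[of a] smooth_step_denominator_pos[of b]
    by (simp add: smooth_step_def E_def field_simps)
qed

lemma Ck_on_smooth_step: "Ck_on k UNIV smooth_step"
proof -
  define E where "E = flat_exp_term 1 0"
  have E: "Ck_on k UNIV E"
    unfolding E_def by (rule Ck_on_flat_exp_term)
  have "Ck_on k UNIV (\<lambda>t. E t + E (- 1 * t + 1))"
    by (rule Ck_on_real_add[OF E Ck_on_real_compose[OF E Ck_on_real_affine]])
  then have "Ck_on k UNIV (\<lambda>t. E t * (1 / (E t + E (- 1 * t + 1))))"
    using smooth_step_denominator_pos
    by (intro Ck_on_real_mult[OF E] Ck_on_real_inverse) (auto simp: E_def less_le)
  moreover have "smooth_step = (\<lambda>t. E t * (1 / (E t + E (- 1 * t + 1))))"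
    by (simp add: fun_eq_iff smooth_step_def E_def)
  ultimately show ?thesis by simp
qed

lemma smooth_step_has_derivative: "(smooth_step has_real_derivative deriv smooth_step t) (at t)"
  using Ck_on_smooth_step by (rule Ck_on_real_has_derivative)

lemma continuous_on_deriv_smooth_step: "continuous_on UNIV (deriv smooth_step)"
  using Ck_on_real_continuous[OF Ck_on_real_deriv[OF Ck_on_smooth_step]] .

lemma deriv_smooth_step_nonneg: "0 \<le> deriv smooth_step t"
  using mono_on_imp_deriv_nonneg[OF _ smooth_step_has_derivative, of UNIV] mono_smooth_step
  by (simp add: mono_on_def monotone_def)

lemma deriv_smooth_step_eq_0:
  assumes "t \<notin> {0..1}"
  shows "deriv smooth_step t = 0"
proof -
  have "(smooth_step has_real_derivative 0) (at t)"
  proof (cases "t < 0")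
    case True
    show ?thesis
      by (rule has_field_derivative_transform_within_open[OF DERIV_const[of 0], where S="{..<0}"])
        (use True in \<open>auto simp: smooth_step_eq_0\<close>)
  next
    case False
    then have "1 < t" using assms by auto
    show ?thesis
      by (rule has_field_derivative_transform_within_open[OF DERIV_const[of 1], where S="{1<..}"])
        (use \<open>1 < t\<close> in \<open>auto simp: smooth_step_eq_1\<close>)
  qed
  then show ?thesis by (rule DERIV_imp_deriv)
qed

section \<open>Test functions on an interval and the du Bois-Reymond lemma\<close>

lemma test_fun_eq_0_outside:
  assumes "test_fun S \<zeta>" and "t \<notin> S"
  shows "\<zeta> t = 0"
proof (rule ccontr)
  assume "\<zeta> t \<noteq> 0"
  then have "t \<in> closure {x. \<zeta> x \<noteq> 0}"
    by (simp add: closure_def)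
  then show False
    using assms unfolding test_fun_def by auto
qed

lemma test_fun_real_Ck_on:
  fixes \<zeta> :: "real \<Rightarrow> real"
  shows "test_fun S \<zeta> \<Longrightarrow> Ck_on k UNIV \<zeta>"
  by (simp add: test_fun_def smooth_def)

lemma test_fun_real_has_derivative:
  fixes \<zeta> :: "real \<Rightarrow> real"
  shows "test_fun S \<zeta> \<Longrightarrow> (\<zeta> has_real_derivative deriv \<zeta> t) (at t)"
  using Ck_on_real_has_derivative test_fun_real_Ck_on by blast

lemma continuous_on_test_fun:
  fixes \<zeta> :: "real \<Rightarrow> real"
  assumes "test_fun S \<zeta>"
  shows "continuous_on A \<zeta>" and "continuous_on A (deriv \<zeta>)"
  using Ck_on_real_continuous[OF test_fun_real_Ck_on[OF assms]]
    Ck_on_real_continuous[OF Ck_on_real_deriv[OF test_fun_real_Ck_on[OF assms, of "Suc 0"]]]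
  by (auto intro: continuous_on_subset[OF _ subset_UNIV])

lemma test_fun_smooth_step_difference:
  assumes \<epsilon>: "0 < \<epsilon>" and cd: "0 < c" "c \<le> d" "d + \<epsilon> < T"
  shows "test_fun {0<..<T} (\<lambda>t. smooth_step ((t - c) / \<epsilon>) - smooth_step ((t - d) / \<epsilon>))"
    (is "test_fun _ ?\<zeta>")
proof -
  have "Ck_on k UNIV (\<lambda>t. smooth_step ((1 / \<epsilon>) * t + - c / \<epsilon>) - smooth_step ((1 / \<epsilon>) * t + - d / \<epsilon>))"
    for k
    by (intro Ck_on_real_diff Ck_on_real_compose[OF Ck_on_smooth_step Ck_on_real_affine])
  moreover have "?\<zeta> = (\<lambda>t. smooth_step ((1 / \<epsilon>) * t + - c / \<epsilon>) - smooth_step ((1 / \<epsilon>) * t + - d / \<epsilon>))"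
    by (simp add: fun_eq_iff diff_divide_distrib)
  ultimately have "smooth ?\<zeta>"
    by (simp add: smooth_def)
  have "{t. ?\<zeta> t \<noteq> 0} \<subseteq> {c..d + \<epsilon>}"
  proof (rule subsetI, rule ccontr)
    fix t assume t: "t \<in> {t. ?\<zeta> t \<noteq> 0}" "t \<notin> {c..d + \<epsilon>}"
    then consider "t < c" | "d + \<epsilon> < t" by auto
    then show False
    proof cases
      case 1
      then have "(t - c) / \<epsilon> \<le> 0" "(t - d) / \<epsilon> \<le> 0"
        using \<epsilon> cd by (simp_all add: divide_le_0_iff)
      then show False using t by (simp add: smooth_step_eq_0)
    next
      case 2
      then have "1 \<le> (t - c) / \<epsilon>" "1 \<le> (t - d) / \<epsilon>"
        using \<epsilon> cd by (simp_all add: le_divide_eq)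
      then show False using t by (simp add: smooth_step_eq_1)
    qed
  qed
  then have "compact (closure {t. ?\<zeta> t \<noteq> 0})"
    using bounded_subset[OF bounded_closed_interval] compact_closure by blast
  moreover have "closure {t. ?\<zeta> t \<noteq> 0} \<subseteq> {0<..<T}"
    using closure_minimal[OF \<open>{t. ?\<zeta> t \<noteq> 0} \<subseteq> {c..d + \<epsilon>}\<close>] cd by fastforce
  ultimately show ?thesis
    using \<open>smooth ?\<zeta>\<close> by (simp add: test_fun_def)
qed

lemma smooth_step_rescaled_has_derivative:
  "((\<lambda>t. smooth_step ((t - a) / \<epsilon>)) has_real_derivative deriv smooth_step ((t - a) / \<epsilon>) / \<epsilon>) (at t)"
proof (cases "\<epsilon> = 0")
  case False
  then have "((\<lambda>t. (t - a) / \<epsilon>) has_real_derivative 1 / \<epsilon>) (at t)"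
    by (auto intro!: derivative_eq_intros)
  from DERIV_chain2[OF smooth_step_has_derivative this] show ?thesis
    by simp
qed simp

lemma continuous_on_smooth_step_kernel:
  assumes "\<epsilon> \<noteq> 0"
  shows "continuous_on S (\<lambda>t. deriv smooth_step ((t - a) / \<epsilon>) / \<epsilon>)"
proof -
  have "continuous_on S (\<lambda>t. (t - a) / \<epsilon>)"
    by (intro continuous_on_divide continuous_on_diff continuous_on_id continuous_on_const)
      (use assms in auto)
  then have "continuous_on S (\<lambda>t. deriv smooth_step ((t - a) / \<epsilon>))"
    by (rule continuous_on_compose2[OF continuous_on_deriv_smooth_step]) auto
  then show ?thesis
    by (intro continuous_on_divide continuous_on_const) (use assms in auto)
qed

lemma integral_smooth_step_kernel:
  assumes "0 < \<epsilon>" "0 \<le> a" "a + \<epsilon> \<le> T"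
  shows "integral {0..T} (\<lambda>t. deriv smooth_step ((t - a) / \<epsilon>) / \<epsilon>) = 1"
proof -
  have "((\<lambda>t. deriv smooth_step ((t - a) / \<epsilon>) / \<epsilon>) has_integral
      smooth_step ((T - a) / \<epsilon>) - smooth_step ((0 - a) / \<epsilon>)) {0..T}"
    using assms smooth_step_rescaled_has_derivative
    by (intro fundamental_theorem_of_calculus)
      (auto intro: has_vector_derivative_at_within simp: has_real_derivative_iff_has_vector_derivative)
  moreover have "smooth_step ((T - a) / \<epsilon>) = 1" "smooth_step ((0 - a) / \<epsilon>) = 0"
    using assms by (auto intro!: smooth_step_eq_1 smooth_step_eq_0 simp: field_simps)
  ultimately have "((\<lambda>t. deriv smooth_step ((t - a) / \<epsilon>) / \<epsilon>) has_integral 1) {0..T}"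
    by simp
  then show ?thesis
    by (rule integral_unique)
qed

lemma abs_integral_weighted_diff_le:
  fixes G w :: "real \<Rightarrow> real"
  assumes cG: "continuous_on {a..b} G" and cw: "continuous_on {a..b} w"
    and w_nonneg: "\<And>t. t \<in> {a..b} \<Longrightarrow> 0 \<le> w t" and w_int: "integral {a..b} w = 1"
    and close: "\<And>t. t \<in> {a..b} \<Longrightarrow> w t \<noteq> 0 \<Longrightarrow> \<bar>G t - y\<bar> \<le> \<eta>"
  shows "\<bar>integral {a..b} (\<lambda>t. G t * w t) - y\<bar> \<le> \<eta>"
proof -
  have int: "(\<lambda>t. G t * w t) integrable_on {a..b}" "(\<lambda>t. y * w t) integrable_on {a..b}"
    "(\<lambda>t. \<eta> * w t) integrable_on {a..b}"
    by (intro integrable_continuous_real continuous_on_mult cG cw continuous_on_const)+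
  have "integral {a..b} (\<lambda>t. G t * w t) - y = integral {a..b} (\<lambda>t. (G t - y) * w t)"
    using integral_diff[OF int(1,2)] w_int by (simp add: left_diff_distrib)
  also have "\<bar>\<dots>\<bar> \<le> integral {a..b} (\<lambda>t. \<eta> * w t)"
  proof -
    have "norm (integral {a..b} (\<lambda>t. (G t - y) * w t)) \<le> integral {a..b} (\<lambda>t. \<eta> * w t)"
    proof (rule integral_norm_bound_integral)
      show "(\<lambda>t. (G t - y) * w t) integrable_on {a..b}"
        by (intro integrable_continuous_real continuous_on_mult continuous_on_diff cG cw
            continuous_on_const)
      fix t assume "t \<in> {a..b}"
      then show "norm ((G t - y) * w t) \<le> \<eta> * w t"
        using close w_nonneg by (cases "w t = 0") (auto simp: abs_mult intro: mult_right_mono)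
    qed (rule int(3))
    then show ?thesis
      by simp
  qed
  also have "\<dots> = \<eta>"
    using w_int by simp
  finally show ?thesis .
qed

lemma integral_smooth_step_kernels_eq:
  fixes G :: "real \<Rightarrow> real"
  assumes cG: "continuous_on {0..T} G"
    and weak: "\<And>\<zeta>. test_fun {0<..<T} \<zeta> \<Longrightarrow> integral {0..T} (\<lambda>t. G t * deriv \<zeta> t) = 0"
    and cd: "0 < \<epsilon>" "0 < c" "c \<le> d" "d + \<epsilon> < T"
  shows "integral {0..T} (\<lambda>t. G t * (deriv smooth_step ((t - c) / \<epsilon>) / \<epsilon>)) =
    integral {0..T} (\<lambda>t. G t * (deriv smooth_step ((t - d) / \<epsilon>) / \<epsilon>))"
proof -
  define w where "w a t = deriv smooth_step ((t - a) / \<epsilon>) / \<epsilon>" for a t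
  have "deriv (\<lambda>t. smooth_step ((t - c) / \<epsilon>) - smooth_step ((t - d) / \<epsilon>)) t = w c t - w d t" for t
    unfolding w_def by (intro DERIV_imp_deriv DERIV_diff smooth_step_rescaled_has_derivative)
  then have "integral {0..T} (\<lambda>t. G t * w c t - G t * w d t) = 0"
    using weak[OF test_fun_smooth_step_difference[OF cd]] by (simp add: right_diff_distrib)
  moreover have "(\<lambda>t. G t * w a t) integrable_on {0..T}" for a
    unfolding w_def
    using \<open>0 < \<epsilon>\<close>
    by (intro integrable_continuous_real continuous_on_mult cG continuous_on_smooth_step_kernel) simp
  ultimately show ?thesis
    by (simp add: integral_diff w_def)
qed

lemma integral_smooth_step_kernel_approx:
  fixes G :: "real \<Rightarrow> real"
  assumes cG: "continuous_on {0..T} G" and a: "0 < \<epsilon>" "0 \<le> a" "a + \<epsilon> \<le> T"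
    and close: "\<And>t. t \<in> {a..a + \<epsilon>} \<Longrightarrow> \<bar>G t - G a\<bar> \<le> \<eta>"
  shows "\<bar>integral {0..T} (\<lambda>t. G t * (deriv smooth_step ((t - a) / \<epsilon>) / \<epsilon>)) - G a\<bar> \<le> \<eta>"
proof (rule abs_integral_weighted_diff_le[OF cG continuous_on_smooth_step_kernel])
  show "\<epsilon> \<noteq> 0"
    using \<open>0 < \<epsilon>\<close> by simp
  show "0 \<le> deriv smooth_step ((t - a) / \<epsilon>) / \<epsilon>" for t
    using deriv_smooth_step_nonneg \<open>0 < \<epsilon>\<close> by simp
  show "integral {0..T} (\<lambda>t. deriv smooth_step ((t - a) / \<epsilon>) / \<epsilon>) = 1"
    using a by (rule integral_smooth_step_kernel)
  fix t assume "deriv smooth_step ((t - a) / \<epsilon>) / \<epsilon> \<noteq> 0"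
  then have "(t - a) / \<epsilon> \<in> {0..1}"
    using deriv_smooth_step_eq_0 by force
  then show "\<bar>G t - G a\<bar> \<le> \<eta>"
    using \<open>0 < \<epsilon>\<close> by (intro close) (auto simp: field_simps)
qed

text \<open>Testing with the difference of two rescaled steps compares weighted averages of \<open>G\<close> near
  \<open>c\<close> and near \<open>d\<close>; as the steps sharpen, these averages tend to \<open>G c\<close> and \<open>G d\<close>.\<close>

lemma du_Bois_Reymond_interior:
  fixes G :: "real \<Rightarrow> real"
  assumes cG: "continuous_on {0..T} G"
    and weak: "\<And>\<zeta>. test_fun {0<..<T} \<zeta> \<Longrightarrow> integral {0..T} (\<lambda>t. G t * deriv \<zeta> t) = 0"
    and cd: "0 < c" "c \<le> d" "d < T"
  shows "G c = G d"
proof (rule ccontr)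
  assume "G c \<noteq> G d"
  define \<eta> where "\<eta> = \<bar>G c - G d\<bar> / 3"
  have "0 < \<eta>"
    using \<open>G c \<noteq> G d\<close> by (simp add: \<eta>_def)
  then obtain \<delta> where "0 < \<delta>" and \<delta>: "\<And>s t. s \<in> {0..T} \<Longrightarrow> t \<in> {0..T} \<Longrightarrow> dist t s < \<delta> \<Longrightarrow>
      dist (G t) (G s) < \<eta>"
    using compact_uniformly_continuous[OF cG compact_Icc] unfolding uniformly_continuous_on_def by metis
  define \<epsilon> where "\<epsilon> = min (\<delta> / 2) ((T - d) / 2)"
  have \<epsilon>: "0 < \<epsilon>" "\<epsilon> < \<delta>" "d + \<epsilon> < T"
    using \<open>0 < \<delta>\<close> cd by (auto simp: \<epsilon>_def min_def field_simps)
  have approx: "\<bar>integral {0..T} (\<lambda>t. G t * (deriv smooth_step ((t - a) / \<epsilon>) / \<epsilon>)) - G a\<bar> \<le> \<eta>"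
    if "a \<in> {c, d}" for a
  proof (rule integral_smooth_step_kernel_approx[OF cG \<open>0 < \<epsilon>\<close>])
    show "0 \<le> a" "a + \<epsilon> \<le> T"
      using that cd \<epsilon> by auto
    show "\<bar>G t - G a\<bar> \<le> \<eta>" if "t \<in> {a..a + \<epsilon>}" for t
      using \<delta>[of a t] that \<open>a \<in> {c, d}\<close> cd \<epsilon> by (auto simp: dist_real_def)
  qed
  have "integral {0..T} (\<lambda>t. G t * (deriv smooth_step ((t - c) / \<epsilon>) / \<epsilon>)) =
      integral {0..T} (\<lambda>t. G t * (deriv smooth_step ((t - d) / \<epsilon>) / \<epsilon>))"
    using cd \<epsilon> by (intro integral_smooth_step_kernels_eq[OF cG weak]) auto
  then have "\<bar>G c - G d\<bar> \<le> 2 * \<eta>"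
    using approx[of c] approx[of d] by (auto simp: abs_le_iff)
  then show False
    using \<open>0 < \<eta>\<close> by (simp add: \<eta>_def)
qed

lemma du_Bois_Reymond:
  fixes G :: "real \<Rightarrow> real"
  assumes "0 < T" and cG: "continuous_on {0..T} G"
    and weak: "\<And>\<zeta>. test_fun {0<..<T} \<zeta> \<Longrightarrow> integral {0..T} (\<lambda>t. G t * deriv \<zeta> t) = 0"
    and "x \<in> {0..T}"
  shows "G x = G (T / 2)"
proof (rule continuous_constant_on_closure[of "{0<..<T}" G])
  show "continuous_on (closure {0<..<T}) G" "x \<in> closure {0<..<T}"
    using assms by auto
  fix t :: real
  assume "t \<in> {0<..<T}"
  then show "G t = G (T / 2)"
    using du_Bois_Reymond_interior[OF cG weak, of t "T / 2"]
      du_Bois_Reymond_interior[OF cG weak, of "T / 2" t]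
    by (cases "t \<le> T / 2") auto
qed

lemma integral_primitive_mult_deriv_test_fun:
  fixes h \<zeta> :: "real \<Rightarrow> real"
  assumes "0 \<le> T" and ch: "continuous_on {0..T} h" and \<zeta>: "test_fun {0<..<T} \<zeta>"
  shows "integral {0..T} (\<lambda>t. integral {0..t} h * deriv \<zeta> t) = - integral {0..T} (\<lambda>t. h t * \<zeta> t)"
proof -
  define H where "H t = integral {0..t} h" for t
  have H: "(H has_real_derivative h t) (at t within {0..T})" if "t \<in> {0..T}" for t
    unfolding H_def by (rule integral_has_real_derivative[OF ch that])
  then have cH: "continuous_on {0..T} H"
    by (rule DERIV_continuous_on)
  note c\<zeta> = continuous_on_test_fun[OF \<zeta>]
  have "((\<lambda>t. h t * \<zeta> t + H t * deriv \<zeta> t) has_integral H T * \<zeta> T - H 0 * \<zeta> 0) {0..T}"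
    using \<open>0 \<le> T\<close> DERIV_mult[OF H has_field_derivative_at_within[OF test_fun_real_has_derivative[OF \<zeta>]]]
    by (intro fundamental_theorem_of_calculus)
      (auto simp: has_real_derivative_iff_has_vector_derivative[symmetric] mult.commute)
  moreover have "\<zeta> 0 = 0" "\<zeta> T = 0"
    using test_fun_eq_0_outside[OF \<zeta>] by auto
  ultimately have "integral {0..T} (\<lambda>t. h t * \<zeta> t + H t * deriv \<zeta> t) = 0"
    by (simp add: integral_unique)
  moreover have "(\<lambda>t. h t * \<zeta> t) integrable_on {0..T}" "(\<lambda>t. H t * deriv \<zeta> t) integrable_on {0..T}"
    by (intro integrable_continuous_real continuous_on_mult ch cH c\<zeta>)+
  ultimately show ?thesis
    by (simp add: H_def integral_add)
qed

lemma integral_lebesgue_on_greaterThanLessThan: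
  fixes f :: "real \<Rightarrow> real"
  assumes "continuous_on {a..b} f"
  shows "(\<integral>t. f t \<partial>lebesgue_on {a<..<b}) = integral {a..b} f"
proof -
  have "f absolutely_integrable_on {a<..<b}"
    by (rule set_integrable_subset[OF absolutely_integrable_continuous_real[OF assms]]) auto
  then have "integrable (lebesgue_on {a<..<b}) f"
    by (simp add: set_integrable_def integrable_restrict_space)
  then have "(\<integral>t. f t \<partial>lebesgue_on {a<..<b}) = integral {a<..<b} f"
    by (rule lebesgue_integral_eq_integral) simp
  also have "\<dots> = integral {a..b} f"
    using integral_open_interval[of a b f] by (simp add: box_real)
  finally show ?thesis .
qed

text \<open>\<open>g\<close> minus a primitive of \<open>h\<close> has vanishing weak derivative, hence is constant.\<close>

lemma has_real_derivative_if_weak_derivative: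
  fixes g h :: "real \<Rightarrow> real"
  assumes "0 < T" and cg: "continuous_on {0..T} g" and ch: "continuous_on {0..T} h"
    and weak: "\<And>\<zeta>. test_fun {0<..<T} \<zeta> \<Longrightarrow>
      (\<integral>t. g t * deriv \<zeta> t \<partial>lebesgue_on {0<..<T}) = - (\<integral>t. h t * \<zeta> t \<partial>lebesgue_on {0<..<T})"
    and t: "t \<in> {0..T}"
  shows "(g has_real_derivative h t) (at t within {0..T})"
proof -
  define H where "H t = integral {0..t} h" for t
  have H: "(H has_real_derivative h s) (at s within {0..T})" if "s \<in> {0..T}" for s
    unfolding H_def by (rule integral_has_real_derivative[OF ch that])
  then have cH: "continuous_on {0..T} H"
    by (rule DERIV_continuous_on)
  have weak_GH: "integral {0..T} (\<lambda>t. (g t - H t) * deriv \<zeta> t) = 0" if \<zeta>: "test_fun {0<..<T} \<zeta>" for \<zeta>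
  proof -
    note c\<zeta> = continuous_on_test_fun[OF \<zeta>]
    have "integral {0..T} (\<lambda>t. g t * deriv \<zeta> t) = - integral {0..T} (\<lambda>t. h t * \<zeta> t)"
      using weak[OF \<zeta>] cg ch c\<zeta>
      by (simp add: integral_lebesgue_on_greaterThanLessThan continuous_on_mult)
    also have "\<dots> = integral {0..T} (\<lambda>t. H t * deriv \<zeta> t)"
      unfolding H_def using \<open>0 < T\<close> ch \<zeta> by (simp add: integral_primitive_mult_deriv_test_fun)
    finally show ?thesis
      using c\<zeta> cg cH
      by (simp add: left_diff_distrib integral_diff integrable_continuous_real continuous_on_mult)
  qed
  have "continuous_on {0..T} (\<lambda>t. g t - H t)"
    using cg cH by (rule continuous_on_diff)
  then have const: "H s + (g (T / 2) - H (T / 2)) = g s" if "s \<in> {0..T}" for s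
    using du_Bois_Reymond[of T "\<lambda>t. g t - H t" s] \<open>0 < T\<close> weak_GH that by fastforce
  have "((\<lambda>s. H s + (g (T / 2) - H (T / 2))) has_real_derivative h t) (at t within {0..T})"
    using H[OF t] by (auto intro!: derivative_eq_intros)
  then show ?thesis
    by (rule has_field_derivative_transform_within[where d=1]) (use t const in auto)
qed

section \<open>The inner product of \<open>L\<^sup>2(\<Omega>)\<close>\<close>

definition inner_L2 :: "'a::euclidean_space set \<Rightarrow> ('a \<Rightarrow> real) \<Rightarrow> ('a \<Rightarrow> real) \<Rightarrow> real" where
  "inner_L2 \<Omega> f g = (\<integral>x. f x * g x \<partial>lebesgue_on \<Omega>)"

lemma L2_integrable_mult:
  assumes "L2 \<Omega> f" "L2 \<Omega> g"
  shows "integrable (lebesgue_on \<Omega>) (\<lambda>x. f x * g x)"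
proof (rule Bochner_Integration.integrable_bound)
  show "integrable (lebesgue_on \<Omega>) (\<lambda>x. (f x)\<^sup>2 + (g x)\<^sup>2)"
    using assms by (simp add: L2_def)
  show "(\<lambda>x. f x * g x) \<in> borel_measurable (lebesgue_on \<Omega>)"
    using assms unfolding L2_def by (intro borel_measurable_times) auto
  show "AE x in lebesgue_on \<Omega>. norm (f x * g x) \<le> norm ((f x)\<^sup>2 + (g x)\<^sup>2)"
  proof (rule AE_I2)
    fix x
    have "2 * (\<bar>f x\<bar> * \<bar>g x\<bar>) \<le> (f x)\<^sup>2 + (g x)\<^sup>2"
      using sum_squares_bound[of "\<bar>f x\<bar>" "\<bar>g x\<bar>"] by (simp add: mult.assoc)
    moreover have "0 \<le> \<bar>f x\<bar> * \<bar>g x\<bar>"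
      by simp
    ultimately have "\<bar>f x\<bar> * \<bar>g x\<bar> \<le> (f x)\<^sup>2 + (g x)\<^sup>2"
      by linarith
    then show "norm (f x * g x) \<le> norm ((f x)\<^sup>2 + (g x)\<^sup>2)"
      by (simp add: abs_mult)
  qed
qed

lemma L2_add:
  assumes "L2 \<Omega> f" "L2 \<Omega> g"
  shows "L2 \<Omega> (\<lambda>x. f x + g x)"
proof -
  have "integrable (lebesgue_on \<Omega>) (\<lambda>x. (f x)\<^sup>2 + (g x)\<^sup>2 + 2 * (f x * g x))"
    using assms L2_integrable_mult unfolding L2_def
    by (intro Bochner_Integration.integrable_add Bochner_Integration.integrable_mult_right) auto
  then show ?thesis
    using assms unfolding L2_def by (simp add: power2_sum mult.assoc borel_measurable_add)
qed

lemma L2_diff: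
  assumes "L2 \<Omega> f" "L2 \<Omega> g"
  shows "L2 \<Omega> (\<lambda>x. f x - g x)"
proof -
  have "integrable (lebesgue_on \<Omega>) (\<lambda>x. (f x)\<^sup>2 + (g x)\<^sup>2 - 2 * (f x * g x))"
    using assms L2_integrable_mult unfolding L2_def
    by (intro Bochner_Integration.integrable_diff Bochner_Integration.integrable_add
        Bochner_Integration.integrable_mult_right) auto
  then show ?thesis
    using assms unfolding L2_def by (simp add: power2_diff mult.assoc borel_measurable_diff)
qed

lemma L2_divide: "L2 \<Omega> f \<Longrightarrow> L2 \<Omega> (\<lambda>x. f x / c)"
  by (simp add: L2_def power_divide borel_measurable_divide)

lemma L2_const: "finite_measure (lebesgue_on \<Omega>) \<Longrightarrow> L2 \<Omega> (\<lambda>x. c)"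
  by (simp add: L2_def finite_measure.integrable_const)

lemma L2_integrable:
  assumes "finite_measure (lebesgue_on \<Omega>)" "L2 \<Omega> f"
  shows "integrable (lebesgue_on \<Omega>) f"
  using L2_integrable_mult[OF assms(2) L2_const[OF assms(1), of 1]] by simp

lemma Hnorm_nonneg [simp]: "0 \<le> Hnorm \<Omega> f"
  by (simp add: Hnorm_def)

lemma Hnorm_sq_eq_inner_L2: "(Hnorm \<Omega> f)\<^sup>2 = inner_L2 \<Omega> f f"
  by (simp add: Hnorm_def inner_L2_def power2_eq_square)

lemma inner_L2_diff_left:
  assumes "L2 \<Omega> f" "L2 \<Omega> g" "L2 \<Omega> h"
  shows "inner_L2 \<Omega> (\<lambda>x. f x - g x) h = inner_L2 \<Omega> f h - inner_L2 \<Omega> g h"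
  using assms by (simp add: inner_L2_def left_diff_distrib L2_integrable_mult)

lemma inner_L2_divide_left: "inner_L2 \<Omega> (\<lambda>x. f x / c) g = inner_L2 \<Omega> f g / c"
  by (simp add: inner_L2_def)

lemma integral_square_diff_quotient_eq_inner_L2:
  assumes f: "L2 \<Omega> f" and g: "L2 \<Omega> g" and w: "L2 \<Omega> w"
  shows "((\<integral>x. (f x - w x)\<^sup>2 \<partial>lebesgue_on \<Omega>) - (\<integral>x. (g x - w x)\<^sup>2 \<partial>lebesgue_on \<Omega>)) / h =
    inner_L2 \<Omega> (\<lambda>x. (f x - g x) / h) (\<lambda>x. (f x - w x) + (g x - w x))"
proof -
  have "(f x - g x) / h * ((f x - w x) + (g x - w x)) = ((f x - w x)\<^sup>2 - (g x - w x)\<^sup>2) / h" for x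
  proof -
    have "(f x - g x) * ((f x - w x) + (g x - w x)) = (f x - w x)\<^sup>2 - (g x - w x)\<^sup>2"
      by (simp add: power2_eq_square algebra_simps)
    then show ?thesis
      by (metis times_divide_eq_left)
  qed
  then have "inner_L2 \<Omega> (\<lambda>x. (f x - g x) / h) (\<lambda>x. (f x - w x) + (g x - w x))
      = (\<integral>x. ((f x - w x)\<^sup>2 - (g x - w x)\<^sup>2) / h \<partial>lebesgue_on \<Omega>)"
    unfolding inner_L2_def by (rule Bochner_Integration.integral_cong[OF refl])
  also have "\<dots> = ((\<integral>x. (f x - w x)\<^sup>2 \<partial>lebesgue_on \<Omega>) - (\<integral>x. (g x - w x)\<^sup>2 \<partial>lebesgue_on \<Omega>)) / h"
    using L2_diff[OF f w] L2_diff[OF g w] by (simp add: L2_def Bochner_Integration.integral_diff)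
  finally show ?thesis ..
qed

lemma integral_add_const_quotient_eq_inner_L2:
  assumes fin: "finite_measure (lebesgue_on \<Omega>)" and f: "L2 \<Omega> f" and g: "L2 \<Omega> g"
  shows "((\<integral>x. c + f x \<partial>lebesgue_on \<Omega>) - (\<integral>x. c + g x \<partial>lebesgue_on \<Omega>)) / h =
    inner_L2 \<Omega> (\<lambda>x. (f x - g x) / h) (\<lambda>x. 1)"
proof -
  have "integrable (lebesgue_on \<Omega>) (\<lambda>x. c + f x)" "integrable (lebesgue_on \<Omega>) (\<lambda>x. c + g x)"
    by (intro L2_integrable[OF fin] L2_add L2_const[OF fin] f g)+
  then show ?thesis
    by (simp add: inner_L2_def flip: Bochner_Integration.integral_diff)
qed

lemma inner_L2_expand_square:
  assumes "L2 \<Omega> f" "L2 \<Omega> g"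
  shows "inner_L2 \<Omega> (\<lambda>x. f x - l * g x) (\<lambda>x. f x - l * g x)
    = inner_L2 \<Omega> f f - 2 * l * inner_L2 \<Omega> f g + l\<^sup>2 * inner_L2 \<Omega> g g"
proof -
  have "(\<lambda>x. (f x - l * g x) * (f x - l * g x))
      = (\<lambda>x. f x * f x - 2 * l * (f x * g x) + l\<^sup>2 * (g x * g x))"
    by (simp add: fun_eq_iff power2_eq_square algebra_simps)
  then show ?thesis
    using assms by (simp add: inner_L2_def L2_integrable_mult)
qed

lemma discriminant_le_if_quadratic_nonneg:
  fixes A B C :: real
  assumes nonneg: "\<And>l. 0 \<le> A - 2 * l * B + l\<^sup>2 * C" and "0 \<le> C"
  shows "B\<^sup>2 \<le> A * C"
proof (cases "C = 0")
  case True
  have "B = 0"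
  proof (rule ccontr)
    assume "B \<noteq> 0"
    then show False
      using nonneg[of "(A + 1) / (2 * B)"] True by (simp add: field_simps)
  qed
  then show ?thesis
    using True by simp
next
  case False
  then have "0 < C"
    using \<open>0 \<le> C\<close> by simp
  then show ?thesis
    using nonneg[of "B / C"] by (simp add: power2_eq_square field_simps)
qed

lemma inner_L2_Cauchy_Schwarz:
  assumes f: "L2 \<Omega> f" and g: "L2 \<Omega> g"
  shows "\<bar>inner_L2 \<Omega> f g\<bar> \<le> Hnorm \<Omega> f * Hnorm \<Omega> g"
proof -
  have "(inner_L2 \<Omega> f g)\<^sup>2 \<le> inner_L2 \<Omega> f f * inner_L2 \<Omega> g g"
  proof (rule discriminant_le_if_quadratic_nonneg)
    show "0 \<le> inner_L2 \<Omega> f f - 2 * l * inner_L2 \<Omega> f g + l\<^sup>2 * inner_L2 \<Omega> g g" for l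
      using inner_L2_expand_square[OF f g, of l] Hnorm_sq_eq_inner_L2 zero_le_power2 by metis
    show "0 \<le> inner_L2 \<Omega> g g"
      using Hnorm_sq_eq_inner_L2 zero_le_power2 by metis
  qed
  then have "(inner_L2 \<Omega> f g)\<^sup>2 \<le> (Hnorm \<Omega> f * Hnorm \<Omega> g)\<^sup>2"
    by (simp add: power_mult_distrib Hnorm_sq_eq_inner_L2)
  then show ?thesis
    by (simp add: power2_le_iff_abs_le)
qed

lemma Hnorm_diff_le:
  assumes f: "L2 \<Omega> f" and g: "L2 \<Omega> g"
  shows "Hnorm \<Omega> (\<lambda>x. f x - g x) \<le> Hnorm \<Omega> f + Hnorm \<Omega> g"
proof -
  have "(Hnorm \<Omega> (\<lambda>x. f x - g x))\<^sup>2 = inner_L2 \<Omega> f f - 2 * inner_L2 \<Omega> f g + inner_L2 \<Omega> g g"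
    using inner_L2_expand_square[OF f g, of 1] by (simp add: Hnorm_sq_eq_inner_L2)
  also have "\<dots> \<le> (Hnorm \<Omega> f + Hnorm \<Omega> g)\<^sup>2"
    using inner_L2_Cauchy_Schwarz[OF f g] by (simp add: power2_sum Hnorm_sq_eq_inner_L2)
  finally show ?thesis
    by (simp add: power2_le_iff_abs_le)
qed

lemma tendsto_inner_L2:
  assumes L2: "\<forall>\<^sub>F s in F. L2 \<Omega> (a s) \<and> L2 \<Omega> (b s)" "L2 \<Omega> a0" "L2 \<Omega> b0"
    and a: "((\<lambda>s. Hnorm \<Omega> (\<lambda>x. a s x - a0 x)) \<longlongrightarrow> 0) F"
    and b: "((\<lambda>s. Hnorm \<Omega> (\<lambda>x. b s x - b0 x)) \<longlongrightarrow> 0) F"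
  shows "((\<lambda>s. inner_L2 \<Omega> (a s) (b s)) \<longlongrightarrow> inner_L2 \<Omega> a0 b0) F"
proof -
  let ?da = "\<lambda>s. Hnorm \<Omega> (\<lambda>x. a s x - a0 x)" and ?db = "\<lambda>s. Hnorm \<Omega> (\<lambda>x. b s x - b0 x)"
  have "((\<lambda>s. ?da s * ?db s + ?da s * Hnorm \<Omega> b0 + Hnorm \<Omega> a0 * ?db s) \<longlongrightarrow> 0) F"
    using tendsto_add[OF tendsto_add[OF tendsto_mult[OF a b] tendsto_mult_left_zero[OF a]]
        tendsto_mult_right_zero[OF b]] by simp
  moreover have "\<forall>\<^sub>F s in F. norm (inner_L2 \<Omega> (a s) (b s) - inner_L2 \<Omega> a0 b0)
      \<le> ?da s * ?db s + ?da s * Hnorm \<Omega> b0 + Hnorm \<Omega> a0 * ?db s"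
    using L2(1)
  proof eventually_elim
    case (elim s)
    then have da: "L2 \<Omega> (\<lambda>x. a s x - a0 x)" and db: "L2 \<Omega> (\<lambda>x. b s x - b0 x)"
      using L2 by (auto intro: L2_diff)
    have "inner_L2 \<Omega> (a s) (b s) - inner_L2 \<Omega> a0 b0 = inner_L2 \<Omega> (\<lambda>x. a s x - a0 x) (\<lambda>x. b s x - b0 x)
        + inner_L2 \<Omega> (\<lambda>x. a s x - a0 x) b0 + inner_L2 \<Omega> a0 (\<lambda>x. b s x - b0 x)"
      using elim L2 da db
      by (simp add: inner_L2_def algebra_simps L2_integrable_mult flip: Bochner_Integration.integral_add
          Bochner_Integration.integral_diff)
    then show ?case
      using inner_L2_Cauchy_Schwarz[OF da db] inner_L2_Cauchy_Schwarz[OF da L2(3)]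
        inner_L2_Cauchy_Schwarz[OF L2(2) db]
      by simp
  qed
  ultimately have "((\<lambda>s. inner_L2 \<Omega> (a s) (b s) - inner_L2 \<Omega> a0 b0) \<longlongrightarrow> 0) F"
    by (rule Lim_null_comparison[rotated])
  then show ?thesis
    by (rule LIM_zero_cancel)
qed

section \<open>Functions of time with values in \<open>L\<^sup>2(\<Omega>)\<close>\<close>

lemma real_mvt_between:
  fixes G :: "real \<Rightarrow> real"
  assumes deriv: "\<And>x. x \<in> {a..b} \<Longrightarrow> (G has_real_derivative G' x) (at x within {a..b})"
    and "s \<in> {a..b}" "t \<in> {a..b}"
  obtains \<xi> where "\<xi> \<in> {a..b}" "\<bar>\<xi> - t\<bar> \<le> \<bar>s - t\<bar>" "G s - G t = G' \<xi> * (s - t)"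
proof -
  define l u where "l = min s t" and "u = max s t"
  have "{l..u} \<subseteq> {a..b}"
    using assms by (auto simp: l_def u_def)
  then have "(G has_derivative (\<lambda>h. G' x * h)) (at x within {l..u})" if "x \<in> {l..u}" for x
    using deriv that has_field_derivative_subset unfolding has_field_derivative_def by blast
  moreover have "l \<le> u"
    by (simp add: l_def u_def)
  ultimately obtain \<xi> where "\<xi> \<in> {l..u}" "G u - G l = G' \<xi> * (u - l)"
    using mvt_very_simple[of l u G "\<lambda>x h. G' x * h"] by auto
  moreover from this(1) have "\<xi> \<in> {a..b}" "\<bar>\<xi> - t\<bar> \<le> \<bar>s - t\<bar>"
    using \<open>{l..u} \<subseteq> {a..b}\<close> by (auto simp: l_def u_def)
  ultimately show ?thesis
    using that by (cases "s \<le> t") (auto simp: l_def u_def algebra_simps)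
qed

lemma CH_L2: "CH \<Omega> T f \<Longrightarrow> t \<in> {0..T} \<Longrightarrow> L2 \<Omega> (f t)"
  by (simp add: CH_def)

lemma CH_const: "L2 \<Omega> v \<Longrightarrow> CH \<Omega> T (\<lambda>t. v)"
  by (simp add: CH_def Hnorm_def)

lemma CH_diff:
  assumes f: "CH \<Omega> T f" and g: "CH \<Omega> T g"
  shows "CH \<Omega> T (\<lambda>t x. f t x - g t x)"
  unfolding CH_def
proof (intro conjI ballI)
  fix t :: real
  assume t: "t \<in> {0..T}"
  then show "L2 \<Omega> (\<lambda>x. f t x - g t x)"
    using f g by (intro L2_diff CH_L2)
  have "((\<lambda>s. Hnorm \<Omega> (\<lambda>x. f s x - f t x) + Hnorm \<Omega> (\<lambda>x. g s x - g t x)) \<longlongrightarrow> 0) (at t within {0..T})"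
    using f g t tendsto_add[of _ 0 _ _ 0] unfolding CH_def by fastforce
  moreover have "\<forall>\<^sub>F s in at t within {0..T}. norm (Hnorm \<Omega> (\<lambda>x. f s x - g s x - (f t x - g t x)))
      \<le> Hnorm \<Omega> (\<lambda>x. f s x - f t x) + Hnorm \<Omega> (\<lambda>x. g s x - g t x)"
    unfolding eventually_at_filter
  proof (intro always_eventually allI impI)
    fix s
    assume "s \<in> {0..T}"
    then have "Hnorm \<Omega> (\<lambda>x. (f s x - f t x) - (g s x - g t x))
        \<le> Hnorm \<Omega> (\<lambda>x. f s x - f t x) + Hnorm \<Omega> (\<lambda>x. g s x - g t x)"
      using f g t by (intro Hnorm_diff_le L2_diff CH_L2)
    then show "norm (Hnorm \<Omega> (\<lambda>x. f s x - g s x - (f t x - g t x)))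
        \<le> Hnorm \<Omega> (\<lambda>x. f s x - f t x) + Hnorm \<Omega> (\<lambda>x. g s x - g t x)"
      by (simp add: Hnorm_nonneg algebra_simps)
  qed
  ultimately show "((\<lambda>s. Hnorm \<Omega> (\<lambda>x. f s x - g s x - (f t x - g t x))) \<longlongrightarrow> 0) (at t within {0..T})"
    by (rule Lim_null_comparison[rotated])
qed

lemma continuous_on_inner_L2_CH:
  assumes f: "CH \<Omega> T f" and g: "CH \<Omega> T g"
  shows "continuous_on {0..T} (\<lambda>t. inner_L2 \<Omega> (f t) (g t))"
  unfolding continuous_on_def
proof
  fix t :: real
  assume t: "t \<in> {0..T}"
  show "((\<lambda>s. inner_L2 \<Omega> (f s) (g s)) \<longlongrightarrow> inner_L2 \<Omega> (f t) (g t)) (at t within {0..T})"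
  proof (rule tendsto_inner_L2)
    show "\<forall>\<^sub>F s in at t within {0..T}. L2 \<Omega> (f s) \<and> L2 \<Omega> (g s)"
      using f g by (auto simp: eventually_at_filter CH_L2)
  qed (use f g t in \<open>auto simp: CH_def\<close>)
qed

context
  fixes \<Omega> :: "'a::euclidean_space set" and T :: real and f df :: "real \<Rightarrow> 'a \<Rightarrow> real"
  assumes T: "0 < T" and CH_f: "CH \<Omega> T f" and CH_df: "CH \<Omega> T df" and tderiv: "tderiv \<Omega> T f df"
begin

lemma inner_L2_has_real_derivative:
  assumes v: "L2 \<Omega> v" and t: "t \<in> {0..T}"
  shows "((\<lambda>s. inner_L2 \<Omega> (f s) v) has_real_derivative inner_L2 \<Omega> (df t) v) (at t within {0..T})"
proof (rule has_real_derivative_if_weak_derivative[OF T _ _ _ t])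
  show "continuous_on {0..T} (\<lambda>s. inner_L2 \<Omega> (f s) v)"
    using continuous_on_inner_L2_CH[OF CH_f CH_const[OF v]] .
  show "continuous_on {0..T} (\<lambda>s. inner_L2 \<Omega> (df s) v)"
    using continuous_on_inner_L2_CH[OF CH_df CH_const[OF v]] .
  show "(\<integral>s. inner_L2 \<Omega> (f s) v * deriv \<zeta> s \<partial>lebesgue_on {0<..<T}) =
      - (\<integral>s. inner_L2 \<Omega> (df s) v * \<zeta> s \<partial>lebesgue_on {0<..<T})"
    if "test_fun {0<..<T} \<zeta>" for \<zeta>
    using tderiv that v unfolding tderiv_def inner_L2_def by blast
qed

text \<open>Mean value theorem for \<open>s \<mapsto> inner_L2 \<Omega> (f s) v\<close>, with \<open>v\<close> the remainder of the
  difference quotient itself, followed by Cauchy-Schwarz.\<close>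

lemma Hnorm_difference_quotient_le:
  assumes s: "s \<in> {0..T}" and \<tau>: "\<tau> \<in> {0..T}" and "s \<noteq> \<tau>"
  obtains \<xi> where "\<xi> \<in> {0..T}" "\<bar>\<xi> - \<tau>\<bar> \<le> \<bar>s - \<tau>\<bar>"
    "Hnorm \<Omega> (\<lambda>x. (f s x - f \<tau> x) / (s - \<tau>) - df \<tau> x) \<le> Hnorm \<Omega> (\<lambda>x. df \<xi> x - df \<tau> x)"
proof -
  define v where "v x = (f s x - f \<tau> x) / (s - \<tau>) - df \<tau> x" for x
  have L2: "L2 \<Omega> (f s)" "L2 \<Omega> (f \<tau>)" "L2 \<Omega> (df \<tau>)"
    using CH_f CH_df s \<tau> by (auto intro: CH_L2)
  then have v: "L2 \<Omega> v"
    unfolding v_def by (intro L2_diff L2_divide)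
  obtain \<xi> where \<xi>: "\<xi> \<in> {0..T}" "\<bar>\<xi> - \<tau>\<bar> \<le> \<bar>s - \<tau>\<bar>"
    and mvt: "inner_L2 \<Omega> (f s) v - inner_L2 \<Omega> (f \<tau>) v = inner_L2 \<Omega> (df \<xi>) v * (s - \<tau>)"
    using real_mvt_between[OF inner_L2_has_real_derivative[OF v] s \<tau>] by blast
  have L2_\<xi>: "L2 \<Omega> (df \<xi>)"
    using CH_df \<xi>(1) by (rule CH_L2)
  have "(Hnorm \<Omega> v)\<^sup>2 = inner_L2 \<Omega> (\<lambda>x. (f s x - f \<tau> x) / (s - \<tau>)) v - inner_L2 \<Omega> (df \<tau>) v"
    unfolding Hnorm_sq_eq_inner_L2 using L2 v
    by (subst (1) v_def[abs_def]) (intro inner_L2_diff_left L2_diff L2_divide)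
  also have "\<dots> = inner_L2 \<Omega> (df \<xi>) v - inner_L2 \<Omega> (df \<tau>) v"
    using mvt \<open>s \<noteq> \<tau>\<close> L2 v by (simp add: inner_L2_divide_left inner_L2_diff_left)
  also have "\<dots> = inner_L2 \<Omega> (\<lambda>x. df \<xi> x - df \<tau> x) v"
    using L2 L2_\<xi> v by (simp add: inner_L2_diff_left)
  also have "\<dots> \<le> Hnorm \<Omega> (\<lambda>x. df \<xi> x - df \<tau> x) * Hnorm \<Omega> v"
    using inner_L2_Cauchy_Schwarz[OF L2_diff[OF L2_\<xi> L2(3)] v] by linarith
  finally have "Hnorm \<Omega> v \<le> Hnorm \<Omega> (\<lambda>x. df \<xi> x - df \<tau> x)"
    by (cases "Hnorm \<Omega> v = 0") (auto simp: power2_eq_square less_le)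
  with \<xi> show ?thesis
    unfolding v_def[abs_def] by (rule that)
qed

lemma tendsto_difference_quotient_L2:
  assumes \<tau>: "\<tau> \<in> {0..T}"
  shows "((\<lambda>s. Hnorm \<Omega> (\<lambda>x. (f s x - f \<tau> x) / (s - \<tau>) - df \<tau> x)) \<longlongrightarrow> 0) (at \<tau> within {0..T})"
proof (rule tendstoI)
  fix e :: real
  assume "0 < e"
  have "((\<lambda>s. Hnorm \<Omega> (\<lambda>x. df s x - df \<tau> x)) \<longlongrightarrow> 0) (at \<tau> within {0..T})"
    using CH_df \<tau> by (simp add: CH_def)
  then obtain d where "0 < d" and d: "\<And>\<xi>. \<xi> \<in> {0..T} \<Longrightarrow> \<xi> \<noteq> \<tau> \<Longrightarrow> dist \<xi> \<tau> < d \<Longrightarrow>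
      Hnorm \<Omega> (\<lambda>x. df \<xi> x - df \<tau> x) < e"
    using \<open>0 < e\<close> unfolding tendsto_iff eventually_at by fastforce
  show "\<forall>\<^sub>F s in at \<tau> within {0..T}. dist (Hnorm \<Omega> (\<lambda>x. (f s x - f \<tau> x) / (s - \<tau>) - df \<tau> x)) 0 < e"
    unfolding eventually_at
  proof (intro exI[of _ d] conjI ballI impI)
    fix s
    assume "s \<in> {0..T}" and s: "s \<noteq> \<tau> \<and> dist s \<tau> < d"
    then obtain \<xi> where \<xi>: "\<xi> \<in> {0..T}" "\<bar>\<xi> - \<tau>\<bar> \<le> \<bar>s - \<tau>\<bar>"
      and le: "Hnorm \<Omega> (\<lambda>x. (f s x - f \<tau> x) / (s - \<tau>) - df \<tau> x) \<le> Hnorm \<Omega> (\<lambda>x. df \<xi> x - df \<tau> x)"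
      using Hnorm_difference_quotient_le \<tau> by blast
    have "Hnorm \<Omega> (\<lambda>x. df \<xi> x - df \<tau> x) < e"
    proof (cases "\<xi> = \<tau>")
      case True
      then show ?thesis
        using \<open>0 < e\<close> by (simp add: Hnorm_def)
    next
      case False
      then show ?thesis
        using d \<xi> s by (simp add: dist_real_def)
    qed
    then show "dist (Hnorm \<Omega> (\<lambda>x. (f s x - f \<tau> x) / (s - \<tau>) - df \<tau> x)) 0 < e"
      using le by simp
  qed (rule \<open>0 < d\<close>)
qed

lemma has_real_derivative_integral_square_diff:
  assumes w: "L2 \<Omega> w" and \<tau>: "\<tau> \<in> {0..T}"
  shows "((\<lambda>s. \<integral>x. (f s x - w x)\<^sup>2 \<partial>lebesgue_on \<Omega>) has_real_derivative
      2 * (\<integral>x. (f \<tau> x - w x) * df \<tau> x \<partial>lebesgue_on \<Omega>)) (at \<tau> within {0..T})"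
proof -
  define q where "q s x = (f s x - f \<tau> x) / (s - \<tau>)" for s x
  define b where "b s x = (f s x - w x) + (f \<tau> x - w x)" for s x
  have L2_f: "L2 \<Omega> (f t)" if "t \<in> {0..T}" for t
    using CH_f that by (rule CH_L2)
  have L2_qb: "L2 \<Omega> (q s)" "L2 \<Omega> (b s)" if "s \<in> {0..T}" for s
    unfolding q_def b_def by (intro L2_add L2_diff L2_divide L2_f[OF that] L2_f[OF \<tau>] w)+
  have "((\<lambda>s. inner_L2 \<Omega> (q s) (b s)) \<longlongrightarrow> inner_L2 \<Omega> (df \<tau>) (b \<tau>)) (at \<tau> within {0..T})"
  proof (rule tendsto_inner_L2)
    show "\<forall>\<^sub>F s in at \<tau> within {0..T}. L2 \<Omega> (q s) \<and> L2 \<Omega> (b s)"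
      using L2_qb by (auto simp: eventually_at_filter)
    show "L2 \<Omega> (df \<tau>)" "L2 \<Omega> (b \<tau>)"
      using CH_df \<tau> L2_qb(2)[OF \<tau>] by (auto intro: CH_L2)
    show "((\<lambda>s. Hnorm \<Omega> (\<lambda>x. q s x - df \<tau> x)) \<longlongrightarrow> 0) (at \<tau> within {0..T})"
      using tendsto_difference_quotient_L2[OF \<tau>] by (simp add: q_def)
    show "((\<lambda>s. Hnorm \<Omega> (\<lambda>x. b s x - b \<tau> x)) \<longlongrightarrow> 0) (at \<tau> within {0..T})"
      using CH_f \<tau> by (simp add: CH_def b_def)
  qed
  moreover have "inner_L2 \<Omega> (q s) (b s) =
      ((\<integral>x. (f s x - w x)\<^sup>2 \<partial>lebesgue_on \<Omega>) - (\<integral>x. (f \<tau> x - w x)\<^sup>2 \<partial>lebesgue_on \<Omega>)) / (s - \<tau>)"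
    if "s \<in> {0..T}" for s
    unfolding q_def b_def using L2_f[OF that] L2_f[OF \<tau>] w
    by (rule integral_square_diff_quotient_eq_inner_L2[symmetric])
  then have "\<forall>\<^sub>F s in at \<tau> within {0..T}. inner_L2 \<Omega> (q s) (b s) =
      ((\<integral>x. (f s x - w x)\<^sup>2 \<partial>lebesgue_on \<Omega>) - (\<integral>x. (f \<tau> x - w x)\<^sup>2 \<partial>lebesgue_on \<Omega>)) / (s - \<tau>)"
    by (auto simp: eventually_at_filter)
  ultimately have "((\<lambda>s. ((\<integral>x. (f s x - w x)\<^sup>2 \<partial>lebesgue_on \<Omega>) - (\<integral>x. (f \<tau> x - w x)\<^sup>2 \<partial>lebesgue_on \<Omega>))
      / (s - \<tau>)) \<longlongrightarrow> inner_L2 \<Omega> (df \<tau>) (b \<tau>)) (at \<tau> within {0..T})"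
    by (rule Lim_transform_eventually)
  moreover have "inner_L2 \<Omega> (df \<tau>) (b \<tau>) = 2 * (\<integral>x. (f \<tau> x - w x) * df \<tau> x \<partial>lebesgue_on \<Omega>)"
    by (simp add: inner_L2_def b_def algebra_simps flip: Bochner_Integration.integral_mult_right_zero)
  ultimately show ?thesis
    by (simp add: has_field_derivative_iff)
qed

lemma has_real_derivative_integral_add_const:
  assumes fin: "finite_measure (lebesgue_on \<Omega>)" and \<tau>: "\<tau> \<in> {0..T}"
  shows "((\<lambda>s. \<integral>x. c + f s x \<partial>lebesgue_on \<Omega>) has_real_derivative (\<integral>x. df \<tau> x \<partial>lebesgue_on \<Omega>))
    (at \<tau> within {0..T})"
proof -
  define q where "q s x = (f s x - f \<tau> x) / (s - \<tau>)" for s x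
  have L2_f: "L2 \<Omega> (f t)" if "t \<in> {0..T}" for t
    using CH_f that by (rule CH_L2)
  have L2_q: "L2 \<Omega> (q s)" if "s \<in> {0..T}" for s
    unfolding q_def by (intro L2_diff L2_divide L2_f[OF that] L2_f[OF \<tau>])
  have "((\<lambda>s. inner_L2 \<Omega> (q s) (\<lambda>x. 1)) \<longlongrightarrow> inner_L2 \<Omega> (df \<tau>) (\<lambda>x. 1)) (at \<tau> within {0..T})"
  proof (rule tendsto_inner_L2)
    show "\<forall>\<^sub>F s in at \<tau> within {0..T}. L2 \<Omega> (q s) \<and> L2 \<Omega> (\<lambda>x. 1)"
      using L2_q L2_const[OF fin] by (auto simp: eventually_at_filter)
    show "L2 \<Omega> (df \<tau>)" "L2 \<Omega> (\<lambda>x. 1)"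
      using CH_df \<tau> L2_const[OF fin] by (auto intro: CH_L2)
    show "((\<lambda>s. Hnorm \<Omega> (\<lambda>x. q s x - df \<tau> x)) \<longlongrightarrow> 0) (at \<tau> within {0..T})"
      using tendsto_difference_quotient_L2[OF \<tau>] by (simp add: q_def)
  qed (simp add: Hnorm_def)
  moreover have "inner_L2 \<Omega> (q s) (\<lambda>x. 1) =
      ((\<integral>x. c + f s x \<partial>lebesgue_on \<Omega>) - (\<integral>x. c + f \<tau> x \<partial>lebesgue_on \<Omega>)) / (s - \<tau>)"
    if "s \<in> {0..T}" for s
    unfolding q_def using fin L2_f[OF that] L2_f[OF \<tau>]
    by (rule integral_add_const_quotient_eq_inner_L2[symmetric])
  then have "\<forall>\<^sub>F s in at \<tau> within {0..T}. inner_L2 \<Omega> (q s) (\<lambda>x. 1) =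
      ((\<integral>x. c + f s x \<partial>lebesgue_on \<Omega>) - (\<integral>x. c + f \<tau> x \<partial>lebesgue_on \<Omega>)) / (s - \<tau>)"
    by (auto simp: eventually_at_filter)
  ultimately have "((\<lambda>s. ((\<integral>x. c + f s x \<partial>lebesgue_on \<Omega>) - (\<integral>x. c + f \<tau> x \<partial>lebesgue_on \<Omega>))
      / (s - \<tau>)) \<longlongrightarrow> inner_L2 \<Omega> (df \<tau>) (\<lambda>x. 1)) (at \<tau> within {0..T})"
    by (rule Lim_transform_eventually)
  then show ?thesis
    by (simp add: has_field_derivative_iff inner_L2_def)
qed

end

section \<open>Integrals over the cylinders \<open>\<Omega> \<times> (0, s)\<close>\<close>

text \<open>Lebesgue measure on the product is only the completion of \<open>lborel \<Otimes>\<^sub>M lborel\<close>, so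
  Tonelli's theorem is applied to a Borel representative \<open>h'\<close>; the slices on which
  \<open>h\<close> and \<open>h'\<close> differ are controlled by a Borel null set \<open>N\<close>.\<close>

lemma nn_integral_lebesgue_pair_eq_iterated:
  fixes h :: "'a::euclidean_space \<times> real \<Rightarrow> ennreal"
  assumes "h \<in> borel_measurable lebesgue"
  shows "(\<integral>\<^sup>+p. h p \<partial>lebesgue) = (\<integral>\<^sup>+t. (\<integral>\<^sup>+x. h (x, t) \<partial>lborel) \<partial>lborel)"
proof -
  obtain h' where h': "h' \<in> borel_measurable lborel" and "AE p in lborel. h p = h' p"
    using completion_ex_borel_measurable[OF assms] by blast
  then obtain N where N: "N \<in> sets lborel" "emeasure lborel N = 0" "{p. h p \<noteq> h' p} \<subseteq> N"
    by (auto elim!: AE_E)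
  have "AE p in lborel \<Otimes>\<^sub>M lborel. p \<notin> N"
    using N unfolding lborel_prod by (intro AE_not_in) (simp add: null_sets_def)
  then have "AE x in lborel. AE t in lborel. (x, t) \<notin> N"
    by (rule lborel_pair.AE_pair)
  moreover have "{p \<in> space (lborel \<Otimes>\<^sub>M lborel). (fst p, snd p) \<notin> N} \<in> sets (lborel \<Otimes>\<^sub>M lborel)"
    using N(1) unfolding lborel_prod
    by (simp add: Compl_eq_Diff_UNIV[symmetric] sets.compl_sets[of N lborel, simplified])
  ultimately have N_slices: "AE t in lborel. AE x in lborel. (x, t) \<notin> N"
    using lborel_pair.AE_commute[of "\<lambda>x t. (x, t) \<notin> N"] by simp
  have "(\<integral>\<^sup>+p. h p \<partial>lebesgue) = (\<integral>\<^sup>+p. h' p \<partial>lborel)"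
    using \<open>AE p in lborel. h p = h' p\<close> by (simp add: nn_integral_completion cong: nn_integral_cong_AE)
  also have "\<dots> = (\<integral>\<^sup>+t. (\<integral>\<^sup>+x. h' (x, t) \<partial>lborel) \<partial>lborel)"
    using lborel_pair.nn_integral_snd[of h'] h' by (simp add: lborel_prod)
  also have "\<dots> = (\<integral>\<^sup>+t. (\<integral>\<^sup>+x. h (x, t) \<partial>lborel) \<partial>lborel)"
    using N_slices
  proof (intro nn_integral_cong_AE, elim AE_mp, intro AE_I2 impI)
    fix t
    assume "AE x in lborel. (x, t) \<notin> N"
    then have "AE x in lborel. h' (x, t) = h (x, t)"
      by eventually_elim (use N(3) in force)
    then show "(\<integral>\<^sup>+x. h' (x, t) \<partial>lborel) = (\<integral>\<^sup>+x. h (x, t) \<partial>lborel)"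
      by (rule nn_integral_cong_AE)
  qed
  finally show ?thesis .
qed

lemma nn_integral_lebesgue_on_eq_iterated:
  fixes f :: "'a::euclidean_space \<times> real \<Rightarrow> real"
  assumes S: "S \<in> sets lebesgue" and f: "f \<in> borel_measurable (lebesgue_on S)"
  shows "(\<integral>\<^sup>+p. ennreal (f p) \<partial>lebesgue_on S) =
    (\<integral>\<^sup>+t. (\<integral>\<^sup>+x. ennreal (indicator S (x, t) * f (x, t)) \<partial>lborel) \<partial>lborel)"
proof -
  have "(\<lambda>p. indicator S p * f p) \<in> borel_measurable lebesgue"
    using f S by (simp add: borel_measurable_restrict_space_iff)
  have "(\<integral>\<^sup>+p. ennreal (f p) \<partial>lebesgue_on S) = (\<integral>\<^sup>+p. ennreal (f p) * indicator S p \<partial>lebesgue)"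
    by (rule nn_integral_restrict_space) (use S in simp)
  also have "\<dots> = (\<integral>\<^sup>+p. ennreal (indicator S p * f p) \<partial>lebesgue)"
    by (intro nn_integral_cong) (simp add: indicator_def)
  also have "\<dots> = (\<integral>\<^sup>+t. (\<integral>\<^sup>+x. ennreal (indicator S (x, t) * f (x, t)) \<partial>lborel) \<partial>lborel)"
    using measurable_compose[OF \<open>(\<lambda>p. indicator S p * f p) \<in> borel_measurable lebesgue\<close>
        measurable_ennreal]
    by (rule nn_integral_lebesgue_pair_eq_iterated)
  finally show ?thesis .
qed

lemma nn_integral_Times_slice:
  fixes F :: "'a::euclidean_space \<Rightarrow> real"
  assumes \<Omega>: "\<Omega> \<in> sets lebesgue" and nonneg: "\<And>x. 0 \<le> F x"
    and int: "t \<in> I \<Longrightarrow> integrable (lebesgue_on \<Omega>) F"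
  shows "(\<integral>\<^sup>+x. ennreal (indicator (\<Omega> \<times> I) (x, t) * F x) \<partial>lborel) =
    ennreal (indicator I t * (\<integral>x. F x \<partial>lebesgue_on \<Omega>))"
proof (cases "t \<in> I")
  case True
  have "(\<integral>\<^sup>+x. ennreal (indicator (\<Omega> \<times> I) (x, t) * F x) \<partial>lborel)
      = (\<integral>\<^sup>+x. ennreal (indicator (\<Omega> \<times> I) (x, t) * F x) \<partial>lebesgue)"
    by (rule nn_integral_completion[symmetric])
  also have "\<dots> = (\<integral>\<^sup>+x. ennreal (F x) * indicator \<Omega> x \<partial>lebesgue)"
    using True by (intro nn_integral_cong) (simp add: indicator_def)
  also have "\<dots> = (\<integral>\<^sup>+x. ennreal (F x) \<partial>lebesgue_on \<Omega>)"
    by (rule nn_integral_restrict_space[symmetric]) (use \<Omega> in simp)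
  also have "\<dots> = ennreal (\<integral>x. F x \<partial>lebesgue_on \<Omega>)"
    using True int nonneg by (intro nn_integral_eq_integral) auto
  finally show ?thesis
    using True by simp
next
  case False
  then have "indicator (\<Omega> \<times> I) (x, t) = (0::real)" for x
    by simp
  then show ?thesis
    using False by simp
qed

lemma integral_Times_interval_eq_integral_integral:
  fixes \<Omega> :: "'a::euclidean_space set" and F :: "real \<Rightarrow> 'a \<Rightarrow> real"
  assumes "open \<Omega>"
    and meas: "(\<lambda>(x, t). F t x) \<in> borel_measurable (lebesgue_on (\<Omega> \<times> {0<..<s}))"
    and nonneg: "\<And>t x. 0 \<le> F t x"
    and int: "\<And>t. t \<in> {0..s} \<Longrightarrow> integrable (lebesgue_on \<Omega>) (F t)"
    and cont: "continuous_on {0..s} (\<lambda>t. \<integral>x. F t x \<partial>lebesgue_on \<Omega>)"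
  shows "(\<integral>p. (\<lambda>(x, t). F t x) p \<partial>lebesgue_on (\<Omega> \<times> {0<..<s})) =
    integral {0..s} (\<lambda>t. \<integral>x. F t x \<partial>lebesgue_on \<Omega>)"
proof -
  define q where "q t = (\<integral>x. F t x \<partial>lebesgue_on \<Omega>)" for t
  have S: "\<Omega> \<times> {0<..<s} \<in> sets lebesgue" and \<Omega>: "\<Omega> \<in> sets lebesgue"
    using \<open>open \<Omega>\<close> by (auto intro!: sets_completionI_sets borel_open open_Times)
  have q_nonneg: "0 \<le> q t" for t
    unfolding q_def by (simp add: nonneg)
  have "(\<integral>\<^sup>+p. ennreal ((\<lambda>(x, t). F t x) p) \<partial>lebesgue_on (\<Omega> \<times> {0<..<s}))
      = (\<integral>\<^sup>+t. ennreal (indicator {0<..<s} t * q t) \<partial>lborel)"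
    unfolding nn_integral_lebesgue_on_eq_iterated[OF S meas] q_def prod.case
  proof (intro nn_integral_cong)
    fix t :: real
    show "(\<integral>\<^sup>+x. ennreal (indicator (\<Omega> \<times> {0<..<s}) (x, t) * F t x) \<partial>lborel) =
        ennreal (indicator {0<..<s} t * (\<integral>x. F t x \<partial>lebesgue_on \<Omega>))"
      by (rule nn_integral_Times_slice[OF \<Omega>]) (use nonneg int in auto)
  qed
  also have "\<dots> = ennreal (integral {0..s} q)"
    using has_integral_open_interval[of q "integral {0..s} q" 0 s]
      integrable_integral[OF integrable_continuous_real[OF cont[folded q_def]]]
    by (intro nn_integral_has_integral_lebesgue q_nonneg) (simp add: box_real)
  finally have "(\<integral>\<^sup>+p. ennreal ((\<lambda>(x, t). F t x) p) \<partial>lebesgue_on (\<Omega> \<times> {0<..<s})) =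
      ennreal (integral {0..s} q)" .
  moreover have "0 \<le> integral {0..s} q"
    using q_nonneg integrable_continuous_real[OF cont[folded q_def]]
    by (intro Henstock_Kurzweil_Integration.integral_nonneg) auto
  ultimately show ?thesis
    using meas nonneg unfolding q_def[symmetric]
    by (subst integral_eq_nn_integral) (auto split: prod.splits)
qed

lemma has_real_derivative_integral_Times_interval:
  fixes \<Omega> :: "'a::euclidean_space set" and F :: "real \<Rightarrow> 'a \<Rightarrow> real"
  assumes "open \<Omega>" and \<tau>: "\<tau> \<in> {0..T}"
    and meas: "(\<lambda>(x, t). F t x) \<in> borel_measurable (lebesgue_on (\<Omega> \<times> {0<..<T}))"
    and nonneg: "\<And>t x. 0 \<le> F t x"
    and int: "\<And>t. t \<in> {0..T} \<Longrightarrow> integrable (lebesgue_on \<Omega>) (F t)"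
    and cont: "continuous_on {0..T} (\<lambda>t. \<integral>x. F t x \<partial>lebesgue_on \<Omega>)"
  shows "((\<lambda>s. \<integral>p. (\<lambda>(x, t). F t x) p \<partial>lebesgue_on (\<Omega> \<times> {0<..<s})) has_real_derivative
    (\<integral>x. F \<tau> x \<partial>lebesgue_on \<Omega>)) (at \<tau> within {0..T})"
proof -
  have eq: "(\<integral>p. (\<lambda>(x, t). F t x) p \<partial>lebesgue_on (\<Omega> \<times> {0<..<s})) =
      integral {0..s} (\<lambda>t. \<integral>x. F t x \<partial>lebesgue_on \<Omega>)" if "s \<in> {0..T}" for s
  proof (rule integral_Times_interval_eq_integral_integral[OF \<open>open \<Omega>\<close> _ nonneg])
    show "(\<lambda>(x, t). F t x) \<in> borel_measurable (lebesgue_on (\<Omega> \<times> {0<..<s}))"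
      using that by (intro measurable_restrict_mono[OF meas]) auto
    show "integrable (lebesgue_on \<Omega>) (F t)" if "t \<in> {0..s}" for t
      using that \<open>s \<in> {0..T}\<close> by (intro int) auto
    show "continuous_on {0..s} (\<lambda>t. \<integral>x. F t x \<partial>lebesgue_on \<Omega>)"
      using that by (intro continuous_on_subset[OF cont]) auto
  qed
  show ?thesis
    by (rule has_field_derivative_transform_within[OF integral_has_real_derivative[OF cont \<tau>],
          where d=1])
      (use \<tau> eq in auto)
qed

lemma has_real_derivative_integral_Times_square_diff:
  fixes \<Omega> :: "'a::euclidean_space set"
  assumes "open \<Omega>" and \<tau>: "\<tau> \<in> {0..T}" and f: "CH \<Omega> T f" "meas_Q \<Omega> T f"
    and g: "CH \<Omega> T g" "meas_Q \<Omega> T g"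
  shows "((\<lambda>s. \<integral>p. (\<lambda>(x, t). (f t x - g t x)\<^sup>2) p \<partial>lebesgue_on (\<Omega> \<times> {0<..<s})) has_real_derivative
    (\<integral>x. (f \<tau> x - g \<tau> x)\<^sup>2 \<partial>lebesgue_on \<Omega>)) (at \<tau> within {0..T})"
proof (rule has_real_derivative_integral_Times_interval[OF \<open>open \<Omega>\<close> \<tau>])
  have "(\<lambda>p. ((\<lambda>(x, t). f t x) p - (\<lambda>(x, t). g t x) p)\<^sup>2)
      \<in> borel_measurable (lebesgue_on (\<Omega> \<times> {0<..<T}))"
    using f(2) g(2) unfolding meas_Q_def by measurable
  then show "(\<lambda>(x, t). (f t x - g t x)\<^sup>2) \<in> borel_measurable (lebesgue_on (\<Omega> \<times> {0<..<T}))"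
    by (simp add: case_prod_beta')
  have CH_fg: "CH \<Omega> T (\<lambda>t x. f t x - g t x)"
    using f(1) g(1) by (rule CH_diff)
  then show "integrable (lebesgue_on \<Omega>) (\<lambda>x. (f t x - g t x)\<^sup>2)" if "t \<in> {0..T}" for t
    using CH_L2[OF CH_fg that] by (simp add: L2_def)
  show "continuous_on {0..T} (\<lambda>t. \<integral>x. (f t x - g t x)\<^sup>2 \<partial>lebesgue_on \<Omega>)"
    using continuous_on_inner_L2_CH[OF CH_fg CH_fg] by (simp add: inner_L2_def power2_eq_square)
qed simp

theorem theorem3p8:
  fixes \<Omega> :: "(real^3) set" and T \<alpha> \<beta> \<tau>s \<tau> :: real and b :: "nat \<Rightarrow> real"
    and \<phi>Q \<sigma>Q d\<phi>Q d\<sigma>Q u us uS \<mu> \<phi> \<sigma> d\<mu> d\<phi> d\<sigma> :: "real \<Rightarrow> real^3 \<Rightarrow> real"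
    and \<phi>\<Omega> \<mu>0 \<phi>0 \<sigma>0 :: "real^3 \<Rightarrow> real"
    and P pih :: "real \<Rightarrow> real" and Bh :: "real \<Rightarrow> ereal" and rm rp :: ereal
  assumes dom: "smooth_bounded_domain \<Omega>" and T: "T > 0"
    and \<alpha>: "\<alpha> > 0" and \<beta>: "\<beta> > 0"
    and b_nonneg: "\<forall>k\<le>6. b k \<ge> 0" and b_nonzero: "\<exists>k\<le>6. b k \<noteq> 0"
    and \<phi>Q_L2: "L2Q \<Omega> T \<phi>Q" and \<sigma>Q_L2: "L2Q \<Omega> T \<sigma>Q" and \<phi>\<Omega>_L2: "L2 \<Omega> \<phi>\<Omega>"
    and \<tau>s: "\<tau>s \<in> {0..T}"
    \<comment> \<open>assumptions on P\<close>
    and P_C2: "Ck_on 2 UNIV P" and P_nonneg: "\<forall>r. P r \<ge> 0"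
    and P_bdd: "\<exists>C. \<forall>r. \<bar>P r\<bar> \<le> C" and P'_bdd: "\<exists>C. \<forall>r. \<bar>deriv P r\<bar> \<le> C"
    and P_lip: "\<exists>L. L-lipschitz_on UNIV P"
    \<comment> \<open>assumptions on F = B_hat + pi_hat\<close>
    and F_nonneg: "\<forall>r. Bh r + ereal (pih r) \<ge> 0"
    and Bh_range: "\<forall>r. Bh r \<ge> 0" and Bh_convex: "ereal_convex Bh" and Bh_lsc: "ereal_lsc Bh"
    and Bh0: "Bh 0 = 0"
    and pih_C3: "Ck_on 3 UNIV pih" and pi_lip: "\<exists>L. L-lipschitz_on UNIV (deriv pih)"
    and B_dom: "subdiff_dom Bh = ereal_interval rm rp" and rm: "rm < 0" and rp: "0 < rp"
    and F_C3: "Ck_on 3 (ereal_interval rm rp) (\<lambda>r. real_of_ereal (Bh r + ereal (pih r)))"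
    and F'_rp: "filterlim (Fprime Bh pih) at_top (left_filter rp)"
    and F'_rm: "filterlim (Fprime Bh pih) at_bot (right_filter rm)"
    \<comment> \<open>initial data\<close>
    and \<phi>0_W: "Wsp \<Omega> \<phi>0" and \<mu>0_V: "H1 \<Omega> \<mu>0" and \<mu>0_Linf: "Linf \<Omega> \<mu>0" and \<sigma>0_V: "H1 \<Omega> \<sigma>0"
    and F\<phi>0_L1: "integrable (lebesgue_on \<Omega>) (\<lambda>x. real_of_ereal (Bh (\<phi>0 x) + ereal (pih (\<phi>0 x))))"
    and \<phi>0_range: "\<exists>a c. rm < ereal a \<and> ereal c < rp \<and> (AE x in lebesgue_on \<Omega>. a \<le> \<phi>0 x \<and> \<phi>0 x \<le> c)"
    \<comment> \<open>control box\<close>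
    and us_Linf: "LinfQ \<Omega> T us" and uS_Linf: "LinfQ \<Omega> T uS"
    and us_le_uS: "AE p in lebesgue_on (\<Omega> \<times> {0<..<T}). (\<lambda>(x,t). us t x \<le> uS t x) p"
    \<comment> \<open>additional assumptions of the theorem\<close>
    and extra_V: "H1 \<Omega> (\<lambda>x. (\<mu>0 x + lap \<Omega> \<phi>0 x - deriv (\<lambda>r. real_of_ereal (Bh r)) (\<phi>0 x)
                                - deriv pih (\<phi>0 x)) / \<beta>)"
    and \<phi>Q_H1: "H1tH \<Omega> T \<phi>Q d\<phi>Q" and \<sigma>Q_H1: "H1tH \<Omega> T \<sigma>Q d\<sigma>Q"
    and \<phi>Q_cont: "CH \<Omega> T \<phi>Q" and \<sigma>Q_cont: "CH \<Omega> T \<sigma>Q"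
    \<comment> \<open>admissible control pair (u, tau)\<close>
    and u_Linf: "LinfQ \<Omega> T u"
    and u_ad: "AE p in lebesgue_on (\<Omega> \<times> {0<..<T}). (\<lambda>(x,t). us t x \<le> u t x \<and> u t x \<le> uS t x) p"
    and \<tau>: "\<tau> \<in> {0..T}"
    \<comment> \<open>(mu, phi, sigma) = S(u), taken with its time-continuous representatives\<close>
    and state: "state_sol \<Omega> T \<alpha> \<beta> P Bh pih rm rp \<mu>0 \<phi>0 \<sigma>0 u \<mu> \<phi> \<sigma> d\<mu> d\<phi> d\<sigma>"
    and cont: "CH \<Omega> T \<mu>" "CH \<Omega> T \<phi>" "CH \<Omega> T \<sigma>" "CH \<Omega> T d\<phi>"
  shows "((\<lambda>s. cost \<Omega> T b \<phi>Q \<sigma>Q \<phi>\<Omega> \<tau>s \<phi> \<sigma> u s) has_real_derivative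
           (b 1 / 2 * (\<integral>x. (\<phi> \<tau> x - \<phi>Q \<tau> x)\<^sup>2 \<partial>lebesgue_on \<Omega>)
          + b 2 * (\<integral>x. (\<phi> \<tau> x - \<phi>\<Omega> x) * d\<phi> \<tau> x \<partial>lebesgue_on \<Omega>)
          + b 3 / 2 * (\<integral>x. (\<sigma> \<tau> x - \<sigma>Q \<tau> x)\<^sup>2 \<partial>lebesgue_on \<Omega>)
          + b 4 / 2 * (\<integral>x. d\<phi> \<tau> x \<partial>lebesgue_on \<Omega>)
          + b 5 + b 6 * (\<tau> - \<tau>s))) (at \<tau> within {0..T})"
proof -
  have "open \<Omega>" and "bounded \<Omega>"
    using dom by (auto simp: smooth_bounded_domain_def)
  then have fin: "finite_measure (lebesgue_on \<Omega>)"
    by (auto intro!: finite_measure_lebesgue_on bounded_set_imp_lmeasurable sets_completionI_sets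
        borel_open)
  have tderiv: "tderiv \<Omega> T \<phi> d\<phi>" and meas: "meas_Q \<Omega> T \<phi>" "meas_Q \<Omega> T \<sigma>"
    using state by (auto simp: state_sol_def Linft_def)
  have meas_Q: "meas_Q \<Omega> T \<phi>Q" "meas_Q \<Omega> T \<sigma>Q"
    using \<phi>Q_L2 \<sigma>Q_L2 by (auto simp: L2Q_def)
  have "((\<lambda>s. (s - \<tau>s)\<^sup>2) has_real_derivative 2 * (\<tau> - \<tau>s)) (at \<tau> within {0..T})"
    by (auto intro!: derivative_eq_intros)
  then have "((\<lambda>s. cost \<Omega> T b \<phi>Q \<sigma>Q \<phi>\<Omega> \<tau>s \<phi> \<sigma> u s) has_real_derivative
      b 1 / 2 * (\<integral>x. (\<phi> \<tau> x - \<phi>Q \<tau> x)\<^sup>2 \<partial>lebesgue_on \<Omega>)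
      + b 2 / 2 * (2 * (\<integral>x. (\<phi> \<tau> x - \<phi>\<Omega> x) * d\<phi> \<tau> x \<partial>lebesgue_on \<Omega>))
      + b 3 / 2 * (\<integral>x. (\<sigma> \<tau> x - \<sigma>Q \<tau> x)\<^sup>2 \<partial>lebesgue_on \<Omega>)
      + b 4 / 2 * (\<integral>x. d\<phi> \<tau> x \<partial>lebesgue_on \<Omega>)
      + b 5 * 1 + b 6 / 2 * (2 * (\<tau> - \<tau>s)) + 0) (at \<tau> within {0..T})"
    unfolding cost_def
    by (intro DERIV_add DERIV_cmult DERIV_ident DERIV_const
        has_real_derivative_integral_Times_square_diff[OF \<open>open \<Omega>\<close> \<tau> cont(2) meas(1) \<phi>Q_cont meas_Q(1)]
        has_real_derivative_integral_Times_square_diff[OF \<open>open \<Omega>\<close> \<tau> cont(3) meas(2) \<sigma>Q_cont meas_Q(2)]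
        has_real_derivative_integral_square_diff[OF T cont(2) cont(4) tderiv \<phi>\<Omega>_L2 \<tau>]
        has_real_derivative_integral_add_const[OF T cont(2) cont(4) tderiv fin \<tau>])
  then show ?thesis
    by (rule DERIV_cong) (simp add: algebra_simps)
qed

end
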